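(* Let $\Delta$ be a triangle, $v$ a vertex, and $(\xi_m)_{m\ge0}$ the associated sequence of partitions of the angular interval $I$ at $v$, normalized to have length $1$, with $P_m$ the number of cutting points of $\xi_m$. Let $n\ge0$ and $c\ge 4$ be integers such that $e^c<P_n$ and $P_{n+c}\ge(4+2c)P_n$. Then there exist three cutting points $x_p,x_q,x_r$ in good position, with indices $p,q,r\in[n+1,n+c]$, whose pairwise distances are at most $e^c/P_n$.
   Context: Let $\Delta$ be a triangle and $v$ a vertex of $\Delta$. Identify the set of directions (rays) emanating from $v$ into $\Delta$ with an interval $I$ via angular coordinate, rescaled so that $I$ has length $1$. A generalized diagonal is a billiard orbit segment from a vertex to a vertex; its length is its number of reflections. A direction $x\in I$ whose billiard trajectory from $v$ is a generalized diagonal is assigned an index, namely the length of that generalized diagonal; we write $x_p$ for such a point of index $p$. The partition $\xi_m$ of $I$ is the partition into subintervals whose cutting points are exactly the directions of index at most $m$; $P_m$ is the number of its cutting points (the number of generalized diagonals from $v$ of length at most $m$). Three cutting points $x_p,x_q,x_r$ with indices $p<q<r$ are in good position if (1) $x_r$ lies strictly between $x_p$ and $x_q$, and (2) the open interval bounded by $x_p$ and $x_q$ contains no cutting point of index $\le r$ other than $x_r$. *)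

theory Defs
  imports "HOL-Analysis.Analysis"
begin

text \<open>A triangle is given by three
  non-collinear vertices a, b, c; the distinguished vertex v is a (the labelling
  is arbitrary, so this is no loss of generality).\<close>

definition nondeg_triangle :: "complex \<Rightarrow> complex \<Rightarrow> complex \<Rightarrow> bool" where
  "nondeg_triangle a b c \<longleftrightarrow> Im ((b - a) * cnj (c - a)) \<noteq> 0"

definition tri :: "complex \<Rightarrow> complex \<Rightarrow> complex \<Rightarrow> complex set" where
  "tri a b c = convex hull {a, b, c}"

text \<open>Reflection law at a boundary point z lying on the side [p,q]:
  the outgoing direction w_out is a positive multiple of the mirror image of the
  incoming direction w_in in the line through p,q.\<close>

definition reflects_at ::
  "complex \<Rightarrow> complex \<Rightarrow> complex \<Rightarrow> complex \<Rightarrow> complex \<Rightarrow> complex \<Rightarrow> bool" where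
  "reflects_at a b c zprev z znext \<longleftrightarrow>
     (\<exists>p q. p \<in> {a, b, c} \<and> q \<in> {a, b, c} \<and> p \<noteq> q \<and> z \<in> closed_segment p q \<and>
        (\<exists>t::real. t > 0 \<and>
           znext - z = of_real t * ((q - p) / cnj (q - p)) * cnj (z - zprev)))"

text \<open>A generalized diagonal starting at the vertex a with k reflections:
  a list of points a = z_0, z_1, ..., z_k, z_(k+1), where z_(k+1) is a vertex,
  z_1..z_k are non-vertex boundary points at which the billiard reflection law holds,
  and each open segment between consecutive points lies in the interior of the
  triangle (so each z_(i+1) is the first boundary hit of the ray leaving z_i).\<close>

definition gen_diag :: "complex \<Rightarrow> complex \<Rightarrow> complex \<Rightarrow> complex list \<Rightarrow> nat \<Rightarrow> bool" where
  "gen_diag a b c zs k \<longleftrightarrow>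
     length zs = k + 2 \<and> zs ! 0 = a \<and> zs ! (k + 1) \<in> {a, b, c} \<and>
     (\<forall>i \<le> k. zs ! i \<noteq> zs ! Suc i \<and>
               open_segment (zs ! i) (zs ! Suc i) \<subseteq> interior (tri a b c)) \<and>
     (\<forall>i \<in> {1..k}. zs ! i \<in> frontier (tri a b c) - {a, b, c} \<and>
               reflects_at a b c (zs ! (i - 1)) (zs ! i) (zs ! Suc i))"

text \<open>Normalized angular coordinate at vertex a of a direction w pointing into the
  triangle: the angle between w and the side direction b - a, divided by the angle
  of the triangle at a (so that the interval I has length 1).\<close>

definition ang_coord :: "complex \<Rightarrow> complex \<Rightarrow> complex \<Rightarrow> complex \<Rightarrow> real" where
  "ang_coord a b c w = \<bar>Arg (w / (b - a))\<bar> / \<bar>Arg ((c - a) / (b - a))\<bar>"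

definition has_index :: "complex \<Rightarrow> complex \<Rightarrow> complex \<Rightarrow> real \<Rightarrow> nat \<Rightarrow> bool" where
  "has_index a b c x p \<longleftrightarrow>
     (\<exists>zs. gen_diag a b c zs p \<and> x = ang_coord a b c (zs ! 1 - a))"

definition cut_points :: "complex \<Rightarrow> complex \<Rightarrow> complex \<Rightarrow> nat \<Rightarrow> real set" where
  "cut_points a b c m = {x. \<exists>p \<le> m. has_index a b c x p}"

definition P_count :: "complex \<Rightarrow> complex \<Rightarrow> complex \<Rightarrow> nat \<Rightarrow> nat" where
  "P_count a b c m = card (cut_points a b c m)"

definition strictly_between :: "real \<Rightarrow> real \<Rightarrow> real \<Rightarrow> bool" where
  "strictly_between y u w \<longleftrightarrow> min u w < y \<and> y < max u w"

definition good_position ::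
  "complex \<Rightarrow> complex \<Rightarrow> complex \<Rightarrow> real \<Rightarrow> nat \<Rightarrow> real \<Rightarrow> nat \<Rightarrow> real \<Rightarrow> nat \<Rightarrow> bool" where
  "good_position a b c xp p xq q xr r \<longleftrightarrow>
     has_index a b c xp p \<and> has_index a b c xq q \<and> has_index a b c xr r \<and>
     p < q \<and> q < r \<and>
     strictly_between xr xp xq \<and>
     (\<forall>y \<in> cut_points a b c r. strictly_between y xp xq \<longrightarrow> y = xr)"

end

theory Submission
  imports Defs
begin

text \<open>Between two cutting points of the same index m + 1 there is a cutting point of smaller
  index: unfolding the two generalized diagonals along their common initial sequence of sides,
  they first hit different sides, which meet at a vertex V, and the unfolded straight ray towards
  V is a shorter generalized diagonal leaving the vertex strictly between them.

  Consequently, in a gap of the partition of level n, a new cutting point with older cutting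
  points on both sides forms a good triple with its two nearest neighbours. A gap without good
  triples therefore receives at most two new cutting points per level, hence at most 2 k up to
  level n + k, while any gap receives at most 2^k - 1 of them, as their number at most doubles
  from level to level. At most P_n / e^k of the P_n + 1 gaps are longer than e^k / P_n, so if no
  good triple of diameter at most e^k / P_n existed, then
  P_(n+k) \<le> (2 + 2 k) P_n + 2 k < (4 + 2 k) P_n, because P_n > e^k > k.\<close>

section \<open>Barycentric coordinates\<close>

definition cross :: "complex \<Rightarrow> complex \<Rightarrow> real" where
  "cross u v = Im (u * cnj v)"

lemma cross_alt: "cross u v = Im u * Re v - Re u * Im v"
  by (simp add: cross_def)

lemma cross_self: "cross u u = 0"
  by (simp add: cross_alt mult.commute)

definition bary_coord :: "complex \<Rightarrow> complex \<Rightarrow> complex \<Rightarrow> complex \<Rightarrow> real" where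
  "bary_coord w0 p q z = cross (z - p) (q - p) / cross (w0 - p) (q - p)"

lemma bary_coord_self: "cross (w0 - p) (q - p) \<noteq> 0 \<Longrightarrow> bary_coord w0 p q w0 = 1"
  by (simp add: bary_coord_def)

lemma bary_coord_base1: "bary_coord w0 p q p = 0"
  by (simp add: bary_coord_def cross_def)

lemma bary_coord_base2: "bary_coord w0 p q q = 0"
  by (simp add: bary_coord_def cross_alt)

lemma cross_affine: "cross (u + r *\<^sub>R (v - w) - p) d
    = cross (u - p) d + r * (cross (v - p) d - cross (w - p) d)"
  by (simp add: cross_alt algebra_simps scaleR_conv_of_real)

lemma bary_coord_affine: "bary_coord w0 p q (u + r *\<^sub>R (v - w))
    = bary_coord w0 p q u + r * (bary_coord w0 p q v - bary_coord w0 p q w)"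
  unfolding bary_coord_def cross_affine by (simp add: add_divide_distrib) (simp add: divide_simps)

lemma decompose_by_cross:
  assumes "cross u w \<noteq> 0"
  shows "y = (cross y w / cross u w) *\<^sub>R u + (cross u y / cross u w) *\<^sub>R w"
proof -
  have 1: "cross y w * Re u + cross u y * Re w = cross u w * Re y"
    by (simp add: cross_alt algebra_simps)
  have 2: "cross y w * Im u + cross u y * Im w = cross u w * Im y"
    by (simp add: cross_alt algebra_simps)
  show ?thesis
  proof (rule complex_eqI)
    show "Re y = Re ((cross y w / cross u w) *\<^sub>R u + (cross u y / cross u w) *\<^sub>R w)"
      using 1 assms by (simp add: field_simps)
    show "Im y = Im ((cross y w / cross u w) *\<^sub>R u + (cross u y / cross u w) *\<^sub>R w)"
      using 2 assms by (simp add: field_simps)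
  qed
qed

locale billiard_triangle =
  fixes a b c :: complex
  assumes nd: "nondeg_triangle a b c"
begin

abbreviation "verts \<equiv> {a, b, c}"

definition bary :: "complex \<Rightarrow> complex \<Rightarrow> real" where
  "bary v z =
    (if v = a then bary_coord a b c z else if v = b then bary_coord b c a z else bary_coord c a b z)"

lemma cross_ne_0: "cross (b - a) (c - a) \<noteq> 0"
  using nd by (simp add: nondeg_triangle_def cross_def)

lemma cross_ne_0_b: "cross (a - b) (c - b) \<noteq> 0"
  using cross_ne_0 by (simp add: cross_alt algebra_simps)

lemma cross_ne_0_c: "cross (b - c) (a - c) \<noteq> 0"
  using cross_ne_0 by (simp add: cross_alt algebra_simps)

lemma cross_ne_0_a: "cross (c - a) (b - a) \<noteq> 0"
  using cross_ne_0 by (simp add: cross_alt algebra_simps)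

lemma distinct_abc: "a \<noteq> b" "a \<noteq> c" "b \<noteq> c"
proof -
  show "a \<noteq> b" using cross_ne_0 by (auto simp: cross_alt)
  show "a \<noteq> c" using cross_ne_0 by (auto simp: cross_alt)
  show "b \<noteq> c" using cross_ne_0 cross_self[of "c - a"] by auto
qed

lemma bary_a: "bary a z = bary_coord a b c z" by (simp add: bary_def)

lemma bary_b: "bary b z = bary_coord b c a z" using distinct_abc by (simp add: bary_def)

lemma bary_c: "bary c z = bary_coord c a b z" using distinct_abc by (simp add: bary_def)

lemma bary_vertices: "bary a a = 1" "bary a b = 0" "bary a c = 0"
                "bary b a = 0" "bary b b = 1" "bary b c = 0"
                "bary c a = 0" "bary c b = 0" "bary c c = 1"
  using cross_ne_0_b cross_ne_0_c cross_ne_0_a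
  by (simp_all add: bary_a bary_b bary_c bary_coord_self bary_coord_base1 bary_coord_base2)

lemma bary_affine: "bary v (u + r *\<^sub>R (x - w)) = bary v u + r * (bary v x - bary v w)"
  by (simp add: bary_def bary_coord_affine)

lemma bary_of_affine_coords:
  assumes "z = a + be *\<^sub>R (b - a) + ga *\<^sub>R (c - a)"
  shows "bary a z = 1 - be - ga" "bary b z = be" "bary c z = ga"
proof -
  have "\<And>v. bary v z = bary v a + be * (bary v b - bary v a) + ga * (bary v c - bary v a)"
    using assms bary_affine by metis
  then show "bary a z = 1 - be - ga" "bary b z = be" "bary c z = ga"
    by (simp_all add: bary_vertices)
qed

lemma bary_of_convex_coords:
  assumes "z = al *\<^sub>R a + be *\<^sub>R b + ga *\<^sub>R c" "al + be + ga = 1"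
  shows "bary a z = al" "bary b z = be" "bary c z = ga"
proof -
  have "al = 1 - be - ga" using assms(2) by simp
  then have "z = a + be *\<^sub>R (b - a) + ga *\<^sub>R (c - a)"
    unfolding assms(1) by (simp add: algebra_simps) (metis add.assoc assms(2) scaleR_add_left
      scaleR_one)
  from bary_of_affine_coords[OF this] show "bary a z = al" "bary b z = be" "bary c z = ga"
    using assms(2) by simp_all
qed

lemma decompose_at_a: "z = a + (cross (z - a) (c - a) / cross (b - a) (c - a)) *\<^sub>R (b - a)
                    + (cross (b - a) (z - a) / cross (b - a) (c - a)) *\<^sub>R (c - a)"
  using decompose_by_cross[OF cross_ne_0, of "z - a"] by (simp add: algebra_simps)

lemma bary_decomp: "z = bary a z *\<^sub>R a + bary b z *\<^sub>R b + bary c z *\<^sub>R c"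
  and bary_sum: "bary a z + bary b z + bary c z = 1"
proof -
  define be where "be = cross (z - a) (c - a) / cross (b - a) (c - a)"
  define ga where "ga = cross (b - a) (z - a) / cross (b - a) (c - a)"
  have z: "z = a + be *\<^sub>R (b - a) + ga *\<^sub>R (c - a)"
    using decompose_at_a unfolding be_def ga_def by blast
  note L = bary_of_affine_coords[OF z]
  show "z = bary a z *\<^sub>R a + bary b z *\<^sub>R b + bary c z *\<^sub>R c"
    unfolding L by (subst z) (simp add: algebra_simps)
  show "bary a z + bary b z + bary c z = 1" unfolding L by simp
qed

lemma mem_tri_iff: "z \<in> tri a b c \<longleftrightarrow> bary a z \<ge> 0 \<and> bary b z \<ge> 0 \<and> bary c z \<ge> 0"
proof
  assume "z \<in> tri a b c"
  then obtain u v w where "0 \<le> u" "0 \<le> v" "0 \<le> w" "u + v + w = 1" "z = u *\<^sub>R a + v *\<^sub>R b + w *\<^sub>R c"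
    unfolding tri_def convex_hull_3 by auto
  then show "bary a z \<ge> 0 \<and> bary b z \<ge> 0 \<and> bary c z \<ge> 0"
    using bary_of_convex_coords by simp
next
  assume "bary a z \<ge> 0 \<and> bary b z \<ge> 0 \<and> bary c z \<ge> 0"
  then show "z \<in> tri a b c"
  proof -
    have "z = bary a z *\<^sub>R a + bary b z *\<^sub>R b + bary c z *\<^sub>R c \<and> 0 \<le> bary a z \<and> 0 \<le> bary b z
      \<and> 0 \<le> bary c z \<and> bary a z + bary b z + bary c z = 1"
      using \<open>bary a z \<ge> 0 \<and> bary b z \<ge> 0 \<and> bary c z \<ge> 0\<close> bary_sum[of z]
        by (simp add: bary_decomp[of z, symmetric])
    then show ?thesis unfolding tri_def convex_hull_3 by blast
  qed
qed

lemma abc_not_collinear: "\<not> collinear {a, b, c}"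
proof
  assume "collinear {a, b, c}"
  then have "collinear {0, a - b, c - b}"
    using collinear_3[of a b c] unfolding NO_MATCH_def by blast
  then have "(c - b) / (a - b) \<in> \<real>" by (simp add: collinear_iff_Reals)
  then obtain r where r: "(c - b) / (a - b) = of_real r" by (metis Reals_cases)
  then have "c - b = of_real r * (a - b)" using distinct_abc by (simp add: field_simps)
  then have "cross (a - b) (c - b) = cross (a - b) (of_real r * (a - b))" by simp
  also have "\<dots> = 0" by (simp add: cross_alt algebra_simps)
  finally have "cross (a - b) (c - b) = 0" .
  then show False using cross_ne_0_b by simp
qed

lemma abc_affine_independent: "\<not> affine_dependent {a, b, c}"
  using abc_not_collinear collinear_3_eq_affine_dependent by blast

lemma interior_tri_explicit: "interior (tri a b c) = {y. \<exists>u. (\<forall>x\<in>{a,b,c}. 0 < u x)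
    \<and> sum u {a,b,c} = 1 \<and> (\<Sum>x\<in>{a,b,c}. u x *\<^sub>R x) = y}"
proof -
  have card: "card {a, b, c} = 3" using distinct_abc by simp
  have "\<not> card {a,b,c} \<le> DIM(complex)" using card by simp
  then show ?thesis
    unfolding tri_def interior_convex_hull_explicit_minimal[OF abc_affine_independent]
      by (simp only: if_False)
qed

lemma mem_interior_tri_iff: "z \<in> interior (tri a b c) \<longleftrightarrow> bary a z > 0 \<and> bary b z > 0 \<and> bary c z > 0"
proof
  assume "z \<in> interior (tri a b c)"
  then have "\<exists>u. (\<forall>x\<in>{a,b,c}. 0 < u x) \<and> sum u {a,b,c} = 1 \<and> (\<Sum>x\<in>{a,b,c}. u x *\<^sub>R x) = z"
    unfolding interior_tri_explicit by simp
  then obtain u where u: "\<forall>x\<in>{a,b,c}. 0 < u x" "sum u {a,b,c} = 1" "(\<Sum>x\<in>{a,b,c}. u x *\<^sub>R x) = z"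
    by blast
  have s1: "sum u {a,b,c} = u a + u b + u c" using distinct_abc by (simp add: add.assoc)
  have s2: "(\<Sum>x\<in>{a,b,c}. u x *\<^sub>R x) = u a *\<^sub>R a + u b *\<^sub>R b + u c *\<^sub>R c"
    using distinct_abc by (simp add: add.assoc)
  have e1: "u a + u b + u c = 1" using u(2) s1 by simp
  have e2: "z = u a *\<^sub>R a + u b *\<^sub>R b + u c *\<^sub>R c" using u(3) s2 by simp
  note L = bary_of_convex_coords[OF e2 e1]
  show "bary a z > 0 \<and> bary b z > 0 \<and> bary c z > 0" unfolding L using u(1) by simp
next
  assume H: "bary a z > 0 \<and> bary b z > 0 \<and> bary c z > 0"
  define u where "u = (\<lambda>x. if x = a then bary a z else if x = b then bary b z else bary c z)"
  have ua: "u a = bary a z" "u b = bary b z" "u c = bary c z"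
    using distinct_abc by (simp_all add: u_def)
  have s1: "sum u {a,b,c} = u a + u b + u c" using distinct_abc by (simp add: add.assoc)
  have s2: "(\<Sum>x\<in>{a,b,c}. u x *\<^sub>R x) = u a *\<^sub>R a + u b *\<^sub>R b + u c *\<^sub>R c"
    using distinct_abc by (simp add: add.assoc)
  have "(\<forall>x\<in>{a,b,c}. 0 < u x) \<and> sum u {a,b,c} = 1 \<and> (\<Sum>x\<in>{a,b,c}. u x *\<^sub>R x) = z"
    unfolding s1 s2 ua using H bary_sum[of z] bary_decomp[of z, symmetric] ua by simp
  then show "z \<in> interior (tri a b c)" unfolding interior_tri_explicit
    by (simp only: mem_Collect_eq) (rule exI)
qed

lemma closed_tri: "closed (tri a b c)"
  unfolding tri_def by (simp add: compact_imp_closed finite_imp_compact compact_convex_hull)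

lemma mem_frontier_tri_iff: "z \<in> frontier (tri a b c)
    \<longleftrightarrow> z \<in> tri a b c \<and> \<not> (bary a z > 0 \<and> bary b z > 0 \<and> bary c z > 0)"
  using closed_tri mem_interior_tri_iff by (simp add: frontier_def)

lemma bary_convex_comb: "bary v ((1 - t) *\<^sub>R u + t *\<^sub>R x) = (1 - t) * bary v u + t * bary v x"
proof -
  have "(1 - t) *\<^sub>R u + t *\<^sub>R x = u + t *\<^sub>R (x - u)" by (simp add: algebra_simps)
  then show ?thesis using bary_affine[of v u t x u] by (simp add: algebra_simps)
qed

lemma bary_segment: "bary v (u + t *\<^sub>R (x - u)) = (1 - t) * bary v u + t * bary v x"
  using bary_affine[of v u t x u] by (simp add: algebra_simps)

lemma open_segment_in_interior:
  assumes "u \<in> tri a b c" "x \<in> tri a b c"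
    and "bary a u > 0 \<or> bary a x > 0" "bary b u > 0 \<or> bary b x > 0" "bary c u > 0 \<or> bary c x > 0"
  shows "open_segment u x \<subseteq> interior (tri a b c)"
proof
  fix y assume "y \<in> open_segment u x"
  then obtain t where t: "0 < t" "t < 1" "y = (1 - t) *\<^sub>R u + t *\<^sub>R x"
    by (auto simp: in_segment)
  have pos: "(1 - t) * p + t * q > 0" if "p \<ge> 0" "q \<ge> 0" "p > 0 \<or> q > 0" for p q :: real
    using that t by (smt (verit) mult_pos_pos mult_nonneg_nonneg)
  show "y \<in> interior (tri a b c)"
    unfolding mem_interior_tri_iff t(3) bary_convex_comb using assms mem_tri_iff pos by meson
qed

lemma open_segment_not_in_side:
  assumes "u \<noteq> x" "open_segment u x \<subseteq> interior (tri a b c)" "v \<in> verts" "bary v u = 0"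
    "bary v x = 0"
  shows False
proof -
  let ?y = "(1 - 1/2) *\<^sub>R u + (1/2::real) *\<^sub>R x"
  have "?y \<in> open_segment u x"
    using assms(1) unfolding in_segment by (intro conjI exI[of _ "1/2"]) auto
  then have "?y \<in> interior (tri a b c)" using assms(2) by blast
  then have "bary v ?y > 0" using assms(3) unfolding mem_interior_tri_iff by auto
  then show False unfolding bary_convex_comb using assms(4,5) by simp
qed

lemma bary_ext: "bary a z = bary a z' \<Longrightarrow> bary b z = bary b z' \<Longrightarrow> bary c z = bary c z' \<Longrightarrow> z = z'"
  using bary_decomp[of z] bary_decomp[of z'] by simp

lemma bary_sum_distinct:
  assumes "V \<in> verts" "X \<in> verts" "Y \<in> verts" "V \<noteq> X" "V \<noteq> Y" "X \<noteq> Y"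
  shows "bary V z + bary X z + bary Y z = 1"
proof -
  have "{V, X, Y} = verts" using assms by auto
  then consider "V = a" "X = b" "Y = c" | "V = a" "X = c" "Y = b" | "V = b" "X = a" "Y = c"
    | "V = b" "X = c" "Y = a" | "V = c" "X = a" "Y = b" | "V = c" "X = b" "Y = a"
    using assms distinct_abc by blast
  then show ?thesis using bary_sum[of z] by cases (simp_all add: algebra_simps)
qed

lemma bary_ext_distinct:
  assumes "V \<in> verts" "X \<in> verts" "Y \<in> verts" "V \<noteq> X" "V \<noteq> Y" "X \<noteq> Y"
    and "bary V z = bary V z'" "bary X z = bary X z'" "bary Y z = bary Y z'"
  shows "z = z'"
proof -
  have "w = V \<or> w = X \<or> w = Y" if "w \<in> verts" for w using that assms(1-6) by auto
  then have "\<And>w. w \<in> verts \<Longrightarrow> bary w z = bary w z'" using assms(7-9) by blast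
  then show ?thesis using bary_ext by simp
qed

end

section \<open>Points on the sides\<close>

context billiard_triangle
begin

text \<open>Sides are named by their opposite vertex: on_side w z says that z lies in the relative
  interior of the side opposite w.\<close>

definition on_side :: "complex \<Rightarrow> complex \<Rightarrow> bool" where
  "on_side w z \<longleftrightarrow> w \<in> verts \<and> bary w z = 0 \<and> (\<forall>v\<in>verts. v \<noteq> w \<longrightarrow> bary v z > 0)"

lemma on_side_vertex: "on_side w z \<Longrightarrow> w \<in> verts" by (simp add: on_side_def)

lemma on_side_bary_0: "on_side w z \<Longrightarrow> bary w z = 0" by (simp add: on_side_def)

lemma on_side_bary_pos: assumes "on_side w z" "v \<in> verts" "v \<noteq> w" shows "bary v z > 0"
  using assms unfolding on_side_def by blast

lemma eq_vertex_if_bary: "bary a z = 1 \<Longrightarrow> bary b z = 0 \<Longrightarrow> bary c z = 0 \<Longrightarrow> z = a"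
  "bary a z = 0 \<Longrightarrow> bary b z = 1 \<Longrightarrow> bary c z = 0 \<Longrightarrow> z = b"
  "bary a z = 0 \<Longrightarrow> bary b z = 0 \<Longrightarrow> bary c z = 1 \<Longrightarrow> z = c"
  using bary_decomp[of z] by simp_all

lemma frontier_minus_verts_iff: "z \<in> frontier (tri a b c) \<and> z \<notin> verts \<longleftrightarrow> (\<exists>w. on_side w z)"
proof
  assume H: "z \<in> frontier (tri a b c) \<and> z \<notin> verts"
  then have ge: "bary a z \<ge> 0" "bary b z \<ge> 0" "bary c z \<ge> 0"
    and nz: "\<not> (bary a z > 0 \<and> bary b z > 0 \<and> bary c z > 0)"
    using mem_frontier_tri_iff mem_tri_iff by auto
  have s: "bary a z + bary b z + bary c z = 1" by (rule bary_sum)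
  have nv: "z \<noteq> a" "z \<noteq> b" "z \<noteq> c" using H by auto
  show "\<exists>w. on_side w z"
  proof (cases "bary a z = 0")
    case True
    then have "bary b z \<noteq> 0" "bary c z \<noteq> 0" using eq_vertex_if_bary s nv by auto
    then show ?thesis using True ge distinct_abc by (intro exI[of _ a]) (auto simp: on_side_def)
  next
    case Fa: False
    show ?thesis
    proof (cases "bary b z = 0")
      case True
      then have "bary c z \<noteq> 0" using eq_vertex_if_bary s nv Fa by auto
      then show ?thesis using True Fa ge distinct_abc
        by (intro exI[of _ b]) (auto simp: on_side_def)
    next
      case False
      then have "bary c z = 0" using nz ge Fa by auto
      then show ?thesis using False Fa ge distinct_abc
        by (intro exI[of _ c]) (auto simp: on_side_def)
    qed
  qed
next
  assume "\<exists>w. on_side w z"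
  then obtain w where w: "on_side w z" by blast
  then have "z \<in> tri a b c" "\<not> (bary a z > 0 \<and> bary b z > 0 \<and> bary c z > 0)"
    unfolding on_side_def mem_tri_iff by (auto simp: less_imp_le)
  moreover have "z \<notin> verts"
    using w distinct_abc unfolding on_side_def by (auto simp: bary_vertices)
  ultimately show "z \<in> frontier (tri a b c) \<and> z \<notin> verts" using mem_frontier_tri_iff by auto
qed

lemma on_side_unique: "on_side w z \<Longrightarrow> on_side w' z \<Longrightarrow> w = w'"
  unfolding on_side_def by force

lemma on_side_in_tri: "on_side w z \<Longrightarrow> z \<in> tri a b c"
  unfolding on_side_def mem_tri_iff by (auto simp: less_imp_le)

definition opp_vertex :: "complex \<Rightarrow> complex" where
  "opp_vertex z = (SOME w. on_side w z)"

lemma opp_vertexI: "on_side w z \<Longrightarrow> opp_vertex z = w"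
  unfolding opp_vertex_def by (metis on_side_unique someI)

lemma on_side_opp_vertex: "on_side w z \<Longrightarrow> on_side (opp_vertex z) z"
  using opp_vertexI by simp

lemma bary_vertex: "r \<in> verts \<Longrightarrow> p \<in> verts \<Longrightarrow> bary r p = (if r = p then 1 else 0)"
  using distinct_abc bary_vertices by auto

lemma on_side_segment:
  assumes "on_side u z1" "on_side u z2" "0 \<le> t" "t \<le> 1"
  shows "on_side u (z1 + t *\<^sub>R (z2 - z1))"
  unfolding on_side_def bary_segment
proof (intro conjI ballI impI)
  show "u \<in> verts" using assms(1) on_side_vertex by blast
  show "(1 - t) * bary u z1 + t * bary u z2 = 0" using assms on_side_bary_0 by simp
  fix v assume v: "v \<in> verts" "v \<noteq> u"
  have "bary v z1 > 0" "bary v z2 > 0" using on_side_bary_pos assms(1,2) v by blast+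
  then show "(1 - t) * bary v z1 + t * bary v z2 > 0" using assms(3,4)
    by (cases "t = 0") (auto intro: add_pos_nonneg add_nonneg_pos mult_pos_pos)
qed

lemma on_side_open_segment_interior:
  assumes "on_side u z" "z' \<in> tri a b c" "bary u z' > 0"
  shows "z \<noteq> z' \<and> open_segment z z' \<subseteq> interior (tri a b c)"
proof
  show "z \<noteq> z'" using assms on_side_bary_0 by force
  have u: "u \<in> verts" using assms on_side_vertex by blast
  have "\<And>v. v \<in> verts \<Longrightarrow> bary v z > 0 \<or> bary v z' > 0"
    using on_side_bary_pos[OF assms(1)] assms(3) by blast
  then show "open_segment z z' \<subseteq> interior (tri a b c)"
    using open_segment_in_interior[OF on_side_in_tri[OF assms(1)] assms(2)] by blast
qed

lemma on_side_open_segment_opp_vertex: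
  assumes o: "on_side u z"
  shows "z \<noteq> u \<and> open_segment z u \<subseteq> interior (tri a b c)"
proof -
  have u: "u \<in> verts" using on_side_vertex[OF o] .
  have "u \<in> tri a b c" unfolding mem_tri_iff using bary_vertex[OF _ u] by simp
  moreover have "bary u u > 0" using bary_vertex[OF u u] by simp
  ultimately show ?thesis by (rule on_side_open_segment_interior[OF o])
qed

lemma on_side_open_segment_on_side:
  assumes o: "on_side u z" "on_side u' z'" and "u \<noteq> u'"
  shows "z \<noteq> z' \<and> open_segment z z' \<subseteq> interior (tri a b c)"
  using on_side_open_segment_interior[OF o(1) on_side_in_tri[OF o(2)]]
    on_side_bary_pos[OF o(2) on_side_vertex[OF o(1)]] assms(3) by simp
end

section \<open>Reflections in the sides\<close>

context billiard_triangle
begin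

definition succ_vertex :: "complex \<Rightarrow> complex" where
  "succ_vertex w = (if w = a then b else if w = b then c else a)"

definition pred_vertex :: "complex \<Rightarrow> complex" where
  "pred_vertex w = (if w = a then c else if w = b then a else b)"

definition mirror :: "complex \<Rightarrow> complex" where
  "mirror w = (pred_vertex w - succ_vertex w) / cnj (pred_vertex w - succ_vertex w)"

definition reflect :: "complex \<Rightarrow> complex \<Rightarrow> complex" where
  "reflect w z = succ_vertex w + mirror w * cnj (z - succ_vertex w)"

lemma succ_ne_pred_vertex: "succ_vertex w \<noteq> pred_vertex w"
  using distinct_abc by (auto simp: succ_vertex_def pred_vertex_def)

lemma succ_pred_vertex_simps: "succ_vertex a = b" "pred_vertex a = c" "succ_vertex b = c"
    "pred_vertex b = a" "succ_vertex c = a" "pred_vertex c = b"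
  using distinct_abc by (simp_all add: succ_vertex_def pred_vertex_def)

lemma succ_pred_vertex: "u \<in> verts
    \<Longrightarrow> succ_vertex u \<in> verts \<and> pred_vertex u \<in> verts \<and> succ_vertex u \<noteq> u \<and> pred_vertex u \<noteq> u"
  using distinct_abc by (auto simp: succ_vertex_def pred_vertex_def)

lemma bary_eq_0_iff_cross:
  assumes "w \<in> verts"
  shows "bary w z = 0 \<longleftrightarrow> cross (z - succ_vertex w) (pred_vertex w - succ_vertex w) = 0"
proof -
  consider "w = a" | "w = b" | "w = c" using assms by blast
  then show ?thesis
  proof cases
    case 1 then show ?thesis
      using cross_ne_0_b by (simp add: bary_a bary_coord_def succ_pred_vertex_simps)
  next
    case 2 then show ?thesis
      using cross_ne_0_c by (simp add: bary_b bary_coord_def succ_pred_vertex_simps)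
  next
    case 3 then show ?thesis
      using cross_ne_0_a by (simp add: bary_c bary_coord_def succ_pred_vertex_simps)
  qed
qed

lemma mirror_side:
  assumes "w \<in> verts" "p \<in> verts" "q \<in> verts" "p \<noteq> q" "p \<noteq> w" "q \<noteq> w"
  shows "(q - p) / cnj (q - p) = mirror w"
proof -
  have sym: "(q - p) / cnj (q - p) = (p - q) / cnj (p - q)"
    by (metis minus_diff_eq complex_cnj_minus minus_divide_divide)
  have "(p = succ_vertex w \<and> q = pred_vertex w) \<or> (p = pred_vertex w \<and> q = succ_vertex w)"
  proof -
    consider "w = a" | "w = b" | "w = c" using assms by blast
    then show ?thesis
    proof cases
      case 1 then have "p \<in> {b, c}" "q \<in> {b, c}" using assms by auto
      then show ?thesis using 1 assms(4) by (auto simp: succ_pred_vertex_simps)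
    next
      case 2 then have "p \<in> {a, c}" "q \<in> {a, c}" using assms by auto
      then show ?thesis using 2 assms(4) by (auto simp: succ_pred_vertex_simps)
    next
      case 3 then have "p \<in> {a, b}" "q \<in> {a, b}" using assms by auto
      then show ?thesis using 3 assms(4) by (auto simp: succ_pred_vertex_simps)
    qed
  qed
  then show ?thesis using sym unfolding mirror_def by auto
qed

lemma mirror_unit: "mirror w * cnj (mirror w) = 1"
proof -
  have "pred_vertex w - succ_vertex w \<noteq> 0" using succ_ne_pred_vertex[of w] by auto
  then show ?thesis by (simp add: mirror_def)
qed

lemma reflect_fixes_side: assumes "w \<in> verts" "bary w z = 0" shows "reflect w z = z"
proof -
  define d where "d = pred_vertex w - succ_vertex w"
  define y where "y = z - succ_vertex w"
  have d0: "d \<noteq> 0" using succ_ne_pred_vertex[of w] by (auto simp: d_def)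
  have "cross y d = 0" using assms bary_eq_0_iff_cross by (simp add: y_def d_def)
  then have "y * cnj d = cnj y * d"
    by (intro complex_eqI) (simp_all add: cross_def algebra_simps)
  then have "d / cnj d * cnj y = y" using d0 by (simp add: field_simps)
  then show ?thesis unfolding reflect_def mirror_def d_def[symmetric] y_def[symmetric]
    by (simp add: y_def)
qed

lemma reflect_affine: "reflect w (u + r *\<^sub>R (x - y))
    = reflect w u + r *\<^sub>R (reflect w x - reflect w y)"
  by (simp add: reflect_def scaleR_conv_of_real algebra_simps)

lemma reflect_involution: "reflect w (reflect w z) = z"
proof -
  have "mirror w * cnj (mirror w * cnj (z - succ_vertex w))
    = (mirror w * cnj (mirror w)) * (z - succ_vertex w)" by simp
  also have "\<dots> = z - succ_vertex w" using mirror_unit by simp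
  finally have e: "mirror w * cnj (mirror w * cnj (z - succ_vertex w)) = z - succ_vertex w" .
  show ?thesis unfolding reflect_def add_diff_cancel_left' e by simp
qed

lemma reflect_reflection_law:
  assumes "w \<in> verts" "bary w z = 0"
  shows "reflect w (z + of_real t * mirror w * cnj (z - z')) = z + t *\<^sub>R (z - z')"
proof -
  have "reflect w (z + of_real t * mirror w * cnj (z - z'))
    = reflect w z + of_real t * (mirror w * cnj (mirror w)) * (z - z')"
    by (simp add: reflect_def algebra_simps)
  then show ?thesis using reflect_fixes_side[OF assms] mirror_unit
    by (simp add: scaleR_conv_of_real)
qed

lemma on_side_closed_segment:
  assumes "on_side u z" shows "z \<in> closed_segment (succ_vertex u) (pred_vertex u)"
proof -
  have u: "u \<in> verts" using assms on_side_vertex by blast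
  note S = succ_pred_vertex[OF u]
  have d: "succ_vertex u \<noteq> pred_vertex u" by (rule succ_ne_pred_vertex)
  let ?t = "bary (pred_vertex u) z"
  have vv: "bary u (succ_vertex u) = 0" "bary u (pred_vertex u) = 0"
    "bary (pred_vertex u) (pred_vertex u) = 1" "bary (pred_vertex u) (succ_vertex u) = 0"
    "bary (succ_vertex u) (succ_vertex u) = 1" "bary (succ_vertex u) (pred_vertex u) = 0"
    using bary_vertex u S d by auto
  have e: "z = (1 - ?t) *\<^sub>R succ_vertex u + ?t *\<^sub>R pred_vertex u"
  proof (rule bary_ext_distinct[of u "succ_vertex u" "pred_vertex u"])
    show "u \<in> verts" "succ_vertex u \<in> verts" "pred_vertex u \<in> verts" "u \<noteq> succ_vertex u"
      "u \<noteq> pred_vertex u" "succ_vertex u \<noteq> pred_vertex u" using u S d by auto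
    show "bary u z = bary u ((1 - ?t) *\<^sub>R succ_vertex u + ?t *\<^sub>R pred_vertex u)"
      unfolding bary_convex_comb vv using assms on_side_bary_0 by simp
    show "bary (pred_vertex u) z
      = bary (pred_vertex u) ((1 - ?t) *\<^sub>R succ_vertex u + ?t *\<^sub>R pred_vertex u)"
      unfolding bary_convex_comb vv by simp
    have "bary u z + bary (succ_vertex u) z + bary (pred_vertex u) z = 1"
      using bary_sum_distinct[of u "succ_vertex u" "pred_vertex u"] u S d by auto
    then show "bary (succ_vertex u) z
      = bary (succ_vertex u) ((1 - ?t) *\<^sub>R succ_vertex u + ?t *\<^sub>R pred_vertex u)"
      unfolding bary_convex_comb vv using assms on_side_bary_0 by simp
  qed
  have "0 \<le> ?t" using assms S on_side_bary_pos by (metis less_imp_le on_side_bary_0 order_refl)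
  moreover have "?t \<le> 1"
  proof -
    have "bary u z + bary (succ_vertex u) z + bary (pred_vertex u) z = 1"
      using bary_sum_distinct[of u "succ_vertex u" "pred_vertex u"] u S d by auto
    moreover have "bary (succ_vertex u) z > 0" using on_side_bary_pos[OF assms] S by blast
    ultimately show ?thesis using assms on_side_bary_0 by simp
  qed
  ultimately show ?thesis using e unfolding in_segment by blast
qed

primrec reflect_seq :: "complex list \<Rightarrow> complex \<Rightarrow> complex" where
  "reflect_seq [] z = z"
| "reflect_seq (w # ws) z = reflect w (reflect_seq ws z)"

lemma reflect_seq_affine: "reflect_seq ws (u + r *\<^sub>R (x - y))
    = reflect_seq ws u + r *\<^sub>R (reflect_seq ws x - reflect_seq ws y)"
  by (induction ws) (simp_all add: reflect_affine)

lemma reflect_seq_snoc: "reflect_seq (ws @ [w]) z = reflect_seq ws (reflect w z)"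
  by (induction ws) simp_all

lemma reflect_seq_inj: "reflect_seq ws u = reflect_seq ws x \<Longrightarrow> u = x"
  by (induction ws) (simp_all, metis reflect_involution)

lemma reflect_seq_fixes_side: "w \<in> verts \<Longrightarrow> bary w z = 0
    \<Longrightarrow> reflect_seq (ws @ [w]) z = reflect_seq ws z"
  by (simp add: reflect_seq_snoc reflect_fixes_side)

lemma reflect_seq_reflection_law:
  assumes "w \<in> verts" "bary w z = 0"
  shows "reflect_seq (ws @ [w]) (z + of_real t * mirror w * cnj (z - z')) - reflect_seq (ws @ [w]) z
    = t *\<^sub>R (reflect_seq ws z - reflect_seq ws z')"
proof -
  have e: "reflect w (z + of_real t * mirror w * cnj (z - z')) = z + t *\<^sub>R (z - z')"
    by (rule reflect_reflection_law[OF assms])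
  show ?thesis unfolding reflect_seq_snoc e reflect_fixes_side[OF assms] reflect_seq_affine by simp
qed

lemma reflects_at_on_side:
  assumes "reflects_at a b c zp z zn" "on_side w z"
  shows "\<exists>t>0. zn - z = of_real t * mirror w * cnj (z - zp)"
proof -
  obtain p q t where pq: "p \<in> verts" "q \<in> verts" "p \<noteq> q" "z \<in> closed_segment p q" "t > 0"
    "zn - z = of_real t * ((q - p) / cnj (q - p)) * cnj (z - zp)"
    using assms(1) unfolding reflects_at_def by blast
  obtain r where r: "r \<in> verts" "r \<noteq> p" "r \<noteq> q" using pq(1-3) distinct_abc by blast
  obtain s where s: "z = (1 - s) *\<^sub>R p + s *\<^sub>R q" using pq(4) by (auto simp: in_segment)
  have "bary r z = 0" unfolding s bary_convex_comb using bary_vertex r pq by simp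
  then have rw: "r = w" using assms(2) r(1) unfolding on_side_def by force
  have "p \<noteq> w" "q \<noteq> w" using r(2,3) rw by auto
  then have "(q - p) / cnj (q - p) = mirror w"
    using mirror_side[of w p q] pq(1-3) r(1) rw by blast
  then show ?thesis using pq by auto
qed

lemma reflects_at_if_mirror:
  assumes o: "on_side w z" and t: "t > 0" and zn: "zn - z = of_real t * mirror w * cnj (z - zp)"
  shows "reflects_at a b c zp z zn"
  unfolding reflects_at_def
proof (intro exI conjI)
  show "succ_vertex w \<in> verts" "pred_vertex w \<in> verts"
    using succ_pred_vertex on_side_vertex[OF o] by auto
  show "succ_vertex w \<noteq> pred_vertex w" by (rule succ_ne_pred_vertex)
  show "z \<in> closed_segment (succ_vertex w) (pred_vertex w)" by (rule on_side_closed_segment[OF o])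
  show "zn - z = of_real t * ((pred_vertex w - succ_vertex w) / cnj (pred_vertex w - succ_vertex w))
      * cnj (z - zp)"
    using zn by (simp add: mirror_def)
qed (fact t)

lemma reflects_at_if_unfolded_collinear:
  assumes o: "on_side u z"
    and z0: "reflect_seq cs z0 = p + \<kappa>0 *\<^sub>R e" and z1: "reflect_seq cs z = p + \<kappa>1 *\<^sub>R e"
    and z2: "reflect_seq (cs @ [u]) z2 = p + \<kappa>2 *\<^sub>R e"
    and incr: "\<kappa>0 < \<kappa>1" "\<kappa>1 < \<kappa>2"
  shows "reflects_at a b c z0 z z2"
proof -
  note u = on_side_vertex[OF o] on_side_bary_0[OF o]
  define t where "t = (\<kappa>2 - \<kappa>1) / (\<kappa>1 - \<kappa>0)"
  have t: "t > 0" "t * (\<kappa>1 - \<kappa>0) = \<kappa>2 - \<kappa>1" using incr by (simp_all add: t_def)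
  define z' where "z' = z + of_real t * mirror u * cnj (z - z0)"
  have "reflect_seq (cs @ [u]) z' - reflect_seq (cs @ [u]) z
    = t *\<^sub>R (reflect_seq cs z - reflect_seq cs z0)"
    unfolding z'_def by (rule reflect_seq_reflection_law[OF u])
  also have "\<dots> = (t * (\<kappa>1 - \<kappa>0)) *\<^sub>R e" unfolding z0 z1 by (simp add: algebra_simps)
  also have "\<dots> = reflect_seq (cs @ [u]) z2 - reflect_seq (cs @ [u]) z"
    unfolding t(2) z2 reflect_seq_fixes_side[OF u] z1 by (simp add: algebra_simps)
  finally have "reflect_seq (cs @ [u]) z' = reflect_seq (cs @ [u]) z2" by simp
  then have "z2 = z + of_real t * mirror u * cnj (z - z0)" unfolding z'_def
    by (metis reflect_seq_inj)
  then show ?thesis using reflects_at_if_mirror[OF o t(1)] by simp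
qed
end

section \<open>Generalized diagonals and their unfoldings\<close>

context billiard_triangle
begin

lemma
  assumes "gen_diag a b c zs k"
  shows gen_diag_ge_1: "k \<ge> 1"
    and gen_diag_start: "zs ! 0 = a"
    and gen_diag_on_side: "\<And>i. 1 \<le> i \<Longrightarrow> i \<le> k \<Longrightarrow> on_side (opp_vertex (zs ! i)) (zs ! i)"
    and gen_diag_first_side: "opp_vertex (zs ! 1) = a"
    and gen_diag_sides_distinct: "\<And>i. 1 \<le> i \<Longrightarrow> i < k \<Longrightarrow> opp_vertex (zs ! i) \<noteq> opp_vertex (zs ! Suc i)"
    and gen_diag_end: "zs ! (k + 1) = opp_vertex (zs ! k)"
    and gen_diag_reflection: "\<And>i. 1 \<le> i \<Longrightarrow> i \<le> k \<Longrightarrow>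
      \<exists>t>0. zs ! Suc i - zs ! i
        = of_real t * mirror (opp_vertex (zs ! i)) * cnj (zs ! i - zs ! (i - 1))"
proof -
  have Z0: "zs ! 0 = a" and ZE: "zs ! (k + 1) \<in> verts"
    and H1: "\<And>i. i \<le> k
      \<Longrightarrow> zs ! i \<noteq> zs ! Suc i \<and> open_segment (zs ! i) (zs ! Suc i) \<subseteq> interior (tri a b c)"
    and H2: "\<And>i. i \<in> {1..k}
      \<Longrightarrow> zs ! i \<in> frontier (tri a b c) - verts
        \<and> reflects_at a b c (zs ! (i - 1)) (zs ! i) (zs ! Suc i)"
    using assms unfolding gen_diag_def by auto
  show "zs ! 0 = a" by (fact Z0)
  have seg: False if "i \<le> k" "v \<in> verts" "bary v (zs ! i) = 0" "bary v (zs ! Suc i) = 0" for i v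
    using open_segment_not_in_side[of "zs ! i" "zs ! Suc i" v] H1[OF that(1)] that by blast
  show k1: "k \<ge> 1"
  proof (rule ccontr)
    assume "\<not> k \<ge> 1"
    then have k0: "k = 0" by simp
    then have "zs ! 1 \<in> verts" using ZE by simp
    moreover have "zs ! 1 \<noteq> a" using H1[of 0] Z0 k0 by auto
    ultimately consider "zs ! 1 = b" | "zs ! 1 = c" by blast
    then show False
    proof cases
      case 1 then show False using seg[of 0 c] k0 Z0 bary_vertices by simp
    next
      case 2 then show False using seg[of 0 b] k0 Z0 bary_vertices by simp
    qed
  qed
  show osd_i: "\<And>i. 1 \<le> i \<Longrightarrow> i \<le> k \<Longrightarrow> on_side (opp_vertex (zs ! i)) (zs ! i)"
    using H2 frontier_minus_verts_iff on_side_opp_vertex by (metis Diff_iff atLeastAtMost_iff)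
  show "opp_vertex (zs ! 1) = a"
  proof (rule ccontr)
    assume ne: "opp_vertex (zs ! 1) \<noteq> a"
    have o: "on_side (opp_vertex (zs ! 1)) (zs ! 1)" using osd_i k1 by simp
    then have "bary (opp_vertex (zs ! 1)) a = 0"
      using bary_vertex[of "opp_vertex (zs ! 1)" a] ne on_side_vertex by auto
    then show False using seg[of 0 "opp_vertex (zs ! 1)"] o on_side_vertex on_side_bary_0 Z0 by auto
  qed
  show "\<And>i. 1 \<le> i \<Longrightarrow> i < k \<Longrightarrow> opp_vertex (zs ! i) \<noteq> opp_vertex (zs ! Suc i)"
  proof
    fix i assume i: "1 \<le> i" "i < k" and eq: "opp_vertex (zs ! i) = opp_vertex (zs ! Suc i)"
    have o1: "on_side (opp_vertex (zs ! i)) (zs ! i)" using osd_i i by simp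
    have o2: "on_side (opp_vertex (zs ! i)) (zs ! Suc i)" using osd_i[of "Suc i"] i eq by simp
    show False using seg[of i "opp_vertex (zs ! i)"] o1 o2 on_side_vertex on_side_bary_0 i by auto
  qed
  show "zs ! (k + 1) = opp_vertex (zs ! k)"
  proof (rule ccontr)
    assume ne: "zs ! (k + 1) \<noteq> opp_vertex (zs ! k)"
    have o: "on_side (opp_vertex (zs ! k)) (zs ! k)" using osd_i k1 by simp
    then have "bary (opp_vertex (zs ! k)) (zs ! (k + 1)) = 0"
      using bary_vertex ne on_side_vertex ZE by auto
    then show False using seg[of k "opp_vertex (zs ! k)"] o on_side_vertex on_side_bary_0 by auto
  qed
  show "\<And>i. 1 \<le> i \<Longrightarrow> i \<le> k
    \<Longrightarrow> \<exists>t>0. zs ! Suc i - zs ! i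
      = of_real t * mirror (opp_vertex (zs ! i)) * cnj (zs ! i - zs ! (i - 1))"
    using H2 reflects_at_on_side osd_i by auto
qed

definition side_seq :: "complex list \<Rightarrow> nat \<Rightarrow> complex list" where
  "side_seq zs k = map (\<lambda>i. opp_vertex (zs ! i)) [1..<k+1]"

lemma length_side_seq: "length (side_seq zs k) = k" by (simp add: side_seq_def)

lemma nth_side_seq: "i < k \<Longrightarrow> side_seq zs k ! i = opp_vertex (zs ! Suc i)"
  unfolding side_seq_def by (subst nth_map) (simp_all del: upt_Suc)

lemma take_Suc_side_seq: "i < k
    \<Longrightarrow> take (Suc i) (side_seq zs k) = take i (side_seq zs k) @ [opp_vertex (zs ! Suc i)]"
  by (simp add: take_Suc_conv_app_nth length_side_seq nth_side_seq)

lemma gen_diag_unfolded_step: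
  assumes "gen_diag a b c zs k" "i \<le> k"
  shows "\<exists>T>0. reflect_seq (take i (side_seq zs k)) (zs ! Suc i)
    - reflect_seq (take i (side_seq zs k)) (zs ! i) = T *\<^sub>R (zs ! 1 - a)"
  using assms(2)
proof (induction i)
  case 0
  then show ?case using gen_diag_start[OF assms(1)] by (intro exI[of _ 1]) simp
next
  case (Suc i)
  then obtain T where T: "T > 0"
    "reflect_seq (take i (side_seq zs k)) (zs ! Suc i)
      - reflect_seq (take i (side_seq zs k)) (zs ! i) = T *\<^sub>R (zs ! 1 - a)"
    by auto
  let ?w = "opp_vertex (zs ! Suc i)"
  have o: "on_side ?w (zs ! Suc i)" using gen_diag_on_side[OF assms(1), of "Suc i"] Suc by simp
  obtain t where t: "t > 0"
    "zs ! Suc (Suc i) - zs ! Suc i = of_real t * mirror ?w * cnj (zs ! Suc i - zs ! i)"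
    using gen_diag_reflection[OF assms(1), of "Suc i"] Suc by auto
  have e: "zs ! Suc (Suc i) = zs ! Suc i + of_real t * mirror ?w * cnj (zs ! Suc i - zs ! i)"
    using t(2) by (simp add: algebra_simps)
  have tk: "take (Suc i) (side_seq zs k) = take i (side_seq zs k) @ [?w]"
    using take_Suc_side_seq Suc by simp
  have "reflect_seq (take (Suc i) (side_seq zs k)) (zs ! Suc (Suc i))
    - reflect_seq (take (Suc i) (side_seq zs k)) (zs ! Suc i)
        = t *\<^sub>R (reflect_seq (take i (side_seq zs k)) (zs ! Suc i)
          - reflect_seq (take i (side_seq zs k)) (zs ! i))"
    unfolding tk e
    by (rule reflect_seq_reflection_law[OF on_side_vertex[OF o] on_side_bary_0[OF o]])
  also have "\<dots> = (t * T) *\<^sub>R (zs ! 1 - a)" using T by simp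
  finally show ?case using t T by (intro exI[of _ "t * T"]) simp
qed

lemma gen_diag_unfolded_next:
  assumes "gen_diag a b c zs k" "i \<le> k"
  shows "reflect_seq (take (Suc i) (side_seq zs k)) (zs ! Suc i)
    = reflect_seq (take i (side_seq zs k)) (zs ! Suc i)"
proof (cases "i < k")
  case True
  have o: "on_side (opp_vertex (zs ! Suc i)) (zs ! Suc i)"
    using gen_diag_on_side[OF assms(1), of "Suc i"] True by simp
  show ?thesis unfolding take_Suc_side_seq[OF True]
    by (rule reflect_seq_fixes_side[OF on_side_vertex[OF o] on_side_bary_0[OF o]])
next
  case False
  then have "i = k" using assms by simp
  then show ?thesis by (simp add: length_side_seq)
qed

text \<open>Undoing the first i reflections straightens the trajectory: the unfolded points lie on
  the ray from a through zs ! 1.\<close>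

lemma gen_diag_unfolding:
  assumes gd: "gen_diag a b c zs k"
  obtains \<sigma> :: "nat \<Rightarrow> real" where "\<sigma> 0 = 0" "strict_mono \<sigma>"
    "\<And>i. i \<le> k \<Longrightarrow> reflect_seq (take i (side_seq zs k)) (zs ! i) = a + \<sigma> i *\<^sub>R (zs ! 1 - a)"
    "\<And>i. i \<le> k \<Longrightarrow> reflect_seq (take i (side_seq zs k)) (zs ! Suc i) = a + \<sigma> (Suc i) *\<^sub>R (zs ! 1 - a)"
proof -
  let ?d = "zs ! 1 - a"
  let ?R = "\<lambda>i. reflect_seq (take i (side_seq zs k))"
  have "\<exists>T>0. i \<le> k \<longrightarrow> ?R i (zs ! Suc i) - ?R i (zs ! i) = T *\<^sub>R ?d" for i
    using gen_diag_unfolded_step[OF gd, of i] zero_less_one by (cases "i \<le> k") blast+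
  then obtain T where T: "\<And>i. T i > 0" "\<And>i. i \<le> k \<Longrightarrow> ?R i (zs ! Suc i) - ?R i (zs ! i) = T i *\<^sub>R ?d"
    by metis
  define \<sigma> where "\<sigma> i = (\<Sum>l<i. T l)" for i
  have mono: "strict_mono \<sigma>" unfolding strict_mono_Suc_iff \<sigma>_def using T(1) by simp
  have X: "?R i (zs ! i) = a + \<sigma> i *\<^sub>R ?d" if "i \<le> Suc k" for i
    using that
  proof (induction i)
    case 0
    then show ?case using gen_diag_start[OF gd] by (simp add: \<sigma>_def)
  next
    case (Suc i)
    have "?R (Suc i) (zs ! Suc i) = ?R i (zs ! Suc i)"
      using gen_diag_unfolded_next[OF gd] Suc by simp
    also have "\<dots> = (?R i (zs ! Suc i) - ?R i (zs ! i)) + ?R i (zs ! i)" by simp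
    also have "\<dots> = T i *\<^sub>R ?d + (a + \<sigma> i *\<^sub>R ?d)" using T(2)[of i] Suc by simp
    also have "\<dots> = a + \<sigma> (Suc i) *\<^sub>R ?d" by (simp add: \<sigma>_def algebra_simps)
    finally show ?case .
  qed
  show ?thesis
  proof (rule that[OF _ mono])
    show "\<sigma> 0 = 0" by (simp add: \<sigma>_def)
    show "?R i (zs ! i) = a + \<sigma> i *\<^sub>R ?d" if "i \<le> k" for i using X that by simp
    show "?R i (zs ! Suc i) = a + \<sigma> (Suc i) *\<^sub>R ?d" if "i \<le> k" for i
      using X[of "Suc i"] gen_diag_unfolded_next[OF gd that] that by simp
  qed
qed

lemma gen_diag_unfolding_prefix:
  assumes gd: "gen_diag a b c zs k" and J: "J < k"
  obtains \<sigma> :: "nat \<Rightarrow> real" where "\<sigma> 0 = 0" "strict_mono \<sigma>"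
    "\<And>i. i \<le> J \<Longrightarrow> reflect_seq (take i (take J (side_seq zs k))) (zs ! i) = a + \<sigma> i *\<^sub>R (zs ! 1 - a)"
    "reflect_seq (take J (side_seq zs k)) (zs ! Suc J) = a + \<sigma> (Suc J) *\<^sub>R (zs ! 1 - a)"
proof -
  obtain \<sigma> where \<sigma>: "\<sigma> 0 = 0" "strict_mono \<sigma>"
    "\<And>i. i \<le> k \<Longrightarrow> reflect_seq (take i (side_seq zs k)) (zs ! i) = a + \<sigma> i *\<^sub>R (zs ! 1 - a)"
    "\<And>i. i \<le> k \<Longrightarrow> reflect_seq (take i (side_seq zs k)) (zs ! Suc i) = a + \<sigma> (Suc i) *\<^sub>R (zs ! 1 - a)"
    using gen_diag_unfolding[OF gd] by blast
  show ?thesis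
  proof (rule that[OF \<sigma>(1,2)])
    show "reflect_seq (take i (take J (side_seq zs k))) (zs ! i)
      = a + \<sigma> i *\<^sub>R (zs ! 1 - a)" if "i \<le> J" for i
      using \<sigma>(3)[of i] that J by (simp add: min_def)
    show "reflect_seq (take J (side_seq zs k)) (zs ! Suc J) = a + \<sigma> (Suc J) *\<^sub>R (zs ! 1 - a)"
      using \<sigma>(4)[of J] J by simp
  qed
qed

lemma gen_diag_of_unfolding:
  fixes w :: "nat \<Rightarrow> complex" and \<kappa> :: "nat \<Rightarrow> real"
  assumes len: "length cs = J" and J1: "1 \<le> J" and first: "cs ! 0 = a"
    and sides: "\<And>i. 1 \<le> i \<Longrightarrow> i \<le> J \<Longrightarrow> on_side (cs ! (i - 1)) (w i)"
    and sides_distinct: "\<And>i. 1 \<le> i \<Longrightarrow> i < J \<Longrightarrow> cs ! (i - 1) \<noteq> cs ! i"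
    and start: "w 0 = a" and final: "w (Suc J) = cs ! (J - 1)"
    and mono: "\<And>i. i \<le> J \<Longrightarrow> \<kappa> i < \<kappa> (Suc i)"
    and unf: "\<And>i. i \<le> J \<Longrightarrow> reflect_seq (take i cs) (w i) = a + \<kappa> i *\<^sub>R e"
    and unf_final: "reflect_seq cs (w (Suc J)) = a + \<kappa> (Suc J) *\<^sub>R e"
  shows "gen_diag a b c (map w [0..<J+2]) J"
proof -
  have take_Suc: "take (Suc i) cs = take i cs @ [cs ! i]" if "i < J" for i
    using that len by (simp add: take_Suc_conv_app_nth)
  have unf_next: "reflect_seq (take i cs) (w (Suc i)) = a + \<kappa> (Suc i) *\<^sub>R e" if "i \<le> J" for i
  proof (cases "i = J")
    case True
    then show ?thesis using unf_final len by simp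
  next
    case False
    then have i: "i < J" using that by simp
    have o: "on_side (cs ! i) (w (Suc i))" using sides[of "Suc i"] i by simp
    have "reflect_seq (take i cs) (w (Suc i)) = reflect_seq (take (Suc i) cs) (w (Suc i))"
      unfolding take_Suc[OF i]
      by (rule reflect_seq_fixes_side[OF on_side_vertex[OF o] on_side_bary_0[OF o], symmetric])
    then show ?thesis using unf[of "Suc i"] i by simp
  qed
  have reflection: "reflects_at a b c (w (i - 1)) (w i) (w (Suc i))" if i: "1 \<le> i" "i \<le> J" for i
  proof -
    have i': "Suc (i - 1) = i" "i - 1 \<le> J" using i by simp_all
    have z1: "reflect_seq (take (i - 1) cs) (w i) = a + \<kappa> i *\<^sub>R e"
      using unf_next[OF i'(2)] i'(1) by simp
    have "take (i - 1) cs @ [cs ! (i - 1)] = take i cs" using take_Suc[of "i - 1"] i by simp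
    then have z2: "reflect_seq (take (i - 1) cs @ [cs ! (i - 1)]) (w (Suc i)) = a + \<kappa> (Suc i) *\<^sub>R e"
      using unf_next[OF i(2)] by simp
    have "\<kappa> (i - 1) < \<kappa> i" using mono[OF i'(2)] i'(1) by simp
    then show ?thesis
      using reflects_at_if_unfolded_collinear[OF sides[OF i] unf[OF i'(2)] z1 z2] mono[OF i(2)]
        by simp
  qed
  have segment: "w i \<noteq> w (Suc i) \<and> open_segment (w i) (w (Suc i)) \<subseteq> interior (tri a b c)"
    if i: "i \<le> J" for i
  proof -
    consider "i = 0" | "1 \<le> i" "i < J" | "i = J" using i by linarith
    then show ?thesis
    proof cases
      case 1
      then show ?thesis using on_side_open_segment_opp_vertex[OF sides[of 1]] J1 first start
        by (auto simp: open_segment_commute)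
    next
      case 2
      then show ?thesis
        using on_side_open_segment_on_side[OF sides[of i] sides[of "Suc i"]] sides_distinct by simp
    next
      case 3
      then show ?thesis using on_side_open_segment_opp_vertex[OF sides[of J]] J1 final by simp
    qed
  qed
  define ws where "ws = map w [0..<J+2]"
  have ws_nth: "ws ! i = w i" if "i < J + 2" for i unfolding ws_def
    using that by (simp del: upt_Suc)
  show ?thesis
    unfolding gen_diag_def ws_def[symmetric]
  proof (intro conjI ballI allI impI)
    show "length ws = J + 2" by (simp add: ws_def)
    show "ws ! 0 = a" using ws_nth[of 0] start by simp
    show "ws ! (J + 1) \<in> verts" using ws_nth[of "J + 1"] final sides[of J] J1 on_side_vertex by simp
    fix i assume "i \<le> J"
    then show "ws ! i \<noteq> ws ! Suc i" "open_segment (ws ! i) (ws ! Suc i) \<subseteq> interior (tri a b c)"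
      using segment ws_nth[of i] ws_nth[of "Suc i"] by simp_all
  next
    fix i assume "i \<in> {1..J}"
    then have i: "1 \<le> i" "i \<le> J" by auto
    show "ws ! i \<in> frontier (tri a b c) - verts"
      using frontier_minus_verts_iff sides[OF i] ws_nth[of i] i by auto
    show "reflects_at a b c (ws ! (i - 1)) (ws ! i) (ws ! Suc i)"
      using reflection[OF i] ws_nth[of i] ws_nth[of "i - 1"] ws_nth[of "Suc i"] i by simp
  qed
qed

end

section \<open>The angular coordinate\<close>

lemma Arg_upper_half:
  assumes "0 < Im z"
  shows "Arg z = pi/2 - arctan (Re z / Im z)"
proof (cases "z = 0")
  case False
  show ?thesis
  proof (rule Arg_unique [of "norm z"])
    show "(cmod z) * exp (\<i> * (pi / 2 - arctan (Re z / Im z))) = z"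
      apply (rule complex_eqI)
      using assms norm_complex_def [of z, symmetric]
      unfolding exp_Euler cos_diff sin_diff sin_of_real cos_of_real
      by (simp_all add: field_simps real_sqrt_divide sin_arctan cos_arctan)
  qed (use False arctan [of "Re z / Im z"] in auto)
qed (use assms in auto)

lemma abs_Arg_eq:
  assumes "Im z \<noteq> 0"
  shows "\<bar>Arg z\<bar> = pi/2 - arctan (Re z / \<bar>Im z\<bar>)"
proof (cases "Im z > 0")
  case True
  then have "Arg z > 0" using Arg_lt_pi by blast
  then show ?thesis using Arg_upper_half[OF True] True by simp
next
  case False
  then have n: "Im (cnj z) > 0" using assms by simp
  have "z \<notin> \<real>" using assms by (simp add: complex_is_Real_iff)
  then have "Arg (cnj z) = - Arg z" by (simp add: Arg_cnj)
  moreover have "Arg (cnj z) > 0" using n Arg_lt_pi by blast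
  ultimately have "\<bar>Arg z\<bar> = Arg (cnj z)" by simp
  then show ?thesis using Arg_upper_half[OF n] False assms by simp
qed

context billiard_triangle
begin

definition ratio :: complex where "ratio = (c - a) / (b - a)"

lemma Im_ratio_ne_0: "Im ratio \<noteq> 0"
proof
  assume "Im ratio = 0"
  then have "ratio = of_real (Re ratio)" by (simp add: complex_eq_iff)
  then have "c - a = of_real (Re ratio) * (b - a)" unfolding ratio_def using distinct_abc
    by (simp add: field_simps)
  then have "cross (c - a) (b - a) = cross (of_real (Re ratio) * (b - a)) (b - a)" by simp
  also have "\<dots> = 0" by (simp add: cross_alt algebra_simps)
  finally show False using cross_ne_0_a by simp
qed

text \<open>The angle at a between b - a and the direction towards (1 - s) b + s c.\<close>

definition side_angle :: "real \<Rightarrow> real" where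
  "side_angle s = pi/2 - arctan ((1 - s + s * Re ratio) / (s * \<bar>Im ratio\<bar>))"

lemma side_angle_pos: "side_angle s > 0"
  using arctan_ubound[of "(1 - s + s * Re ratio) / (s * \<bar>Im ratio\<bar>)"] by (simp add: side_angle_def)

lemma side_angle_strict_mono:
  assumes "0 < s1" "s1 < s2"
  shows "side_angle s1 < side_angle s2"
proof -
  have I: "\<bar>Im ratio\<bar> > 0" using Im_ratio_ne_0 by simp
  have e: "(1 - s + s * Re ratio) / (s * \<bar>Im ratio\<bar>)
    = 1 / (s * \<bar>Im ratio\<bar>) + (Re ratio - 1) / \<bar>Im ratio\<bar>"
    if "s > 0" for s
    using that I by (simp add: field_simps)
  have "1 / (s2 * \<bar>Im ratio\<bar>) < 1 / (s1 * \<bar>Im ratio\<bar>)"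
    using assms I by (simp add: frac_less2 divide_strict_left_mono mult_strict_right_mono)
  then have "arctan ((1 - s2 + s2 * Re ratio) / (s2 * \<bar>Im ratio\<bar>))
      < arctan ((1 - s1 + s1 * Re ratio) / (s1 * \<bar>Im ratio\<bar>))"
    using e assms by (simp add: arctan_less_iff)
  then show ?thesis by (simp add: side_angle_def)
qed

lemma abs_Arg_side_point:
  assumes "s > 0"
  shows "\<bar>Arg (1 - s + s * ratio)\<bar> = side_angle s"
proof -
  have im: "Im (1 - s + s * ratio) = s * Im ratio" by simp
  then have "Im (1 - s + s * ratio) \<noteq> 0" using assms Im_ratio_ne_0 by simp
  then show ?thesis using abs_Arg_eq im assms by (simp add: side_angle_def abs_mult)
qed

lemma ang_coord_on_side_a:
  assumes "on_side a z"
  shows "ang_coord a b c (z - a) = side_angle (bary c z) / side_angle 1"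
proof -
  let ?s = "bary c z"
  have la: "bary a z = 0" using assms on_side_bary_0 by blast
  have s0: "?s > 0" using on_side_bary_pos[OF assms, of c] distinct_abc by auto
  have lb: "bary b z = 1 - ?s" using bary_sum[of z] la by simp
  have z: "z = (1 - ?s) *\<^sub>R b + ?s *\<^sub>R c" using bary_decomp[of z] la lb by simp
  have ba: "b - a \<noteq> 0" using distinct_abc by simp
  have "(z - a) / (b - a) = 1 - of_real ?s + of_real ?s * ratio"
    unfolding ratio_def using ba by (subst z) (simp add: field_simps scaleR_conv_of_real)
  then have "\<bar>Arg ((z - a) / (b - a))\<bar> = side_angle ?s" using abs_Arg_side_point[OF s0] by simp
  moreover have "\<bar>Arg ((c - a) / (b - a))\<bar> = side_angle 1"
    using abs_Arg_side_point[of 1] unfolding ratio_def by simp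
  ultimately show ?thesis by (simp add: ang_coord_def)
qed

lemma bary_c_on_side_a: "on_side a z \<Longrightarrow> 0 < bary c z \<and> bary c z < 1"
proof -
  assume o: "on_side a z"
  have "bary b z > 0" "bary c z > 0" using on_side_bary_pos[OF o] distinct_abc by auto
  moreover have "bary a z = 0" using o on_side_bary_0 by blast
  ultimately show ?thesis using bary_sum[of z] by simp
qed

lemma ang_coord_range: "on_side a z \<Longrightarrow> 0 < ang_coord a b c (z - a) \<and> ang_coord a b c (z - a) < 1"
  using ang_coord_on_side_a bary_c_on_side_a side_angle_strict_mono[of "bary c z" 1] side_angle_pos
    by (simp add: field_simps)

lemma ang_coord_strict_mono: "on_side a z1 \<Longrightarrow> on_side a z2 \<Longrightarrow> bary c z1 < bary c z2 \<Longrightarrow>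
   ang_coord a b c (z1 - a) < ang_coord a b c (z2 - a)"
  using ang_coord_on_side_a bary_c_on_side_a side_angle_strict_mono[of "bary c z1"
    "bary c z2"] side_angle_pos[of 1]
  by (simp add: divide_strict_right_mono)

lemma ang_coord_scaleR: "r > 0 \<Longrightarrow> ang_coord a b c (r *\<^sub>R w) = ang_coord a b c w"
proof -
  assume r: "r > 0"
  have h: "(r *\<^sub>R w) / (b - a) = (w / (b - a)) * of_real r" by (simp add: scaleR_conv_of_real)
  show ?thesis by (simp only: ang_coord_def h Arg_times_of_real2[OF r])
qed

lemma ang_coord_eq_if_side_seq_eq:
  assumes gx: "gen_diag a b c zx k" and gy: "gen_diag a b c zy k"
    and eq: "side_seq zx k = side_seq zy k"
  shows "ang_coord a b c (zx ! 1 - a) = ang_coord a b c (zy ! 1 - a)"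
proof -
  obtain sx where sx: "sx 0 = 0" "strict_mono sx"
    "reflect_seq (take k (side_seq zx k)) (zx ! Suc k) = a + sx (Suc k) *\<^sub>R (zx ! 1 - a)"
    using gen_diag_unfolding[OF gx] by (metis order_refl)
  obtain sy where sy: "sy 0 = 0" "strict_mono sy"
    "reflect_seq (take k (side_seq zy k)) (zy ! Suc k) = a + sy (Suc k) *\<^sub>R (zy ! 1 - a)"
    using gen_diag_unfolding[OF gy] by (metis order_refl)
  have "opp_vertex (zx ! k) = opp_vertex (zy ! k)"
    using eq nth_side_seq[of "k - 1" k zx] nth_side_seq[of "k - 1" k zy] gen_diag_ge_1[OF gx]
      by simp
  then have "zx ! Suc k = zy ! Suc k" using gen_diag_end[OF gx] gen_diag_end[OF gy] by simp
  then have h: "sx (Suc k) *\<^sub>R (zx ! 1 - a) = sy (Suc k) *\<^sub>R (zy ! 1 - a)"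
    using sx(3) sy(3) eq by simp
  have px: "sx (Suc k) > 0" and py: "sy (Suc k) > 0"
    using strict_monoD[OF sx(2), of 0 "Suc k"] strict_monoD[OF sy(2), of 0 "Suc k"] sx(1) sy(1)
      by simp_all
  have "zx ! 1 - a = (1 / sx (Suc k)) *\<^sub>R (sx (Suc k) *\<^sub>R (zx ! 1 - a))" using px by simp
  also have "\<dots> = (1 / sx (Suc k)) *\<^sub>R (sy (Suc k) *\<^sub>R (zy ! 1 - a))" by (simp only: h)
  also have "\<dots> = (sy (Suc k) / sx (Suc k)) *\<^sub>R (zy ! 1 - a)" by simp
  finally show ?thesis using ang_coord_scaleR px py by simp
qed

lemma has_index_range: "has_index a b c x p \<Longrightarrow> 0 < x \<and> x < 1"
proof -
  assume "has_index a b c x p"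
  then obtain zs where zs: "gen_diag a b c zs p" "x = ang_coord a b c (zs ! 1 - a)"
    unfolding has_index_def by blast
  have "on_side a (zs ! 1)"
    using gen_diag_on_side[OF zs(1), of 1] gen_diag_first_side[OF zs(1)] gen_diag_ge_1[OF zs(1)]
      by simp
  then show ?thesis using ang_coord_range zs(2) by simp
qed

end

section \<open>A shorter diagonal between two diagonals of equal length\<close>

lemma convex_comb_between:
  assumes "(p::real) < q" "0 < l" "l < 1"
  shows "p < (1 - l) * p + l * q" "(1 - l) * p + l * q < q"
proof -
  have h1: "l * (q - p) > 0" using assms by simp
  have h2: "l * (q - p) < 1 * (q - p)" using assms by (intro mult_strict_right_mono) simp_all
  have e: "(1 - l) * p + l * q = p + l * (q - p)" by (simp add: algebra_simps)
  show "p < (1 - l) * p + l * q" using h1 e by simp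
  show "(1 - l) * p + l * q < q" using h2 e by simp
qed

lemma ray_interpolation:
  fixes s t P Q :: real
  assumes "s > 0" "t > 0" "P > 0" "Q > 0"
  defines "\<kappa> \<equiv> 1 / (P / s + Q / t)"
  shows "0 < \<kappa> * Q / t" "\<kappa> * Q / t < 1" "(1 - \<kappa> * Q / t) * s = \<kappa> * P"
proof -
  define D where "D = P / s + Q / t"
  have D: "D > 0" "Q / t < D" "D - Q / t = P / s" using assms by (simp_all add: D_def add_pos_pos)
  have \<kappa>: "\<kappa> = 1 / D" by (simp add: \<kappa>_def D_def)
  show "0 < \<kappa> * Q / t" "\<kappa> * Q / t < 1"
    using D assms(1-4) unfolding \<kappa> by (simp_all add: pos_divide_less_eq)
  have "1 - \<kappa> * Q / t = (D - Q / t) / D" using D(1) unfolding \<kappa> by (simp add: field_simps)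
  then show "(1 - \<kappa> * Q / t) * s = \<kappa> * P" unfolding D(3) \<kappa> using assms(1-4) by simp
qed

context billiard_triangle
begin

text \<open>The lines through x0, x1 and through y0, y1 meet at A beyond the side opposite V; as
  they leave the triangle through the two other sides, the segment from A to their common
  vertex V crosses that side strictly between x0 and y0.\<close>

lemma segment_to_vertex_crosses_side:
  assumes x0: "on_side V x0" and y0: "on_side V y0"
    and x1: "on_side ox x1" and y1: "on_side oy y1"
    and distinct: "V \<noteq> ox" "V \<noteq> oy" "ox \<noteq> oy"
    and pos: "mx > 0" "my > 0"
    and Ax: "A = x0 + (- mx) *\<^sub>R (x1 - x0)" and Ay: "A = y0 + (- my) *\<^sub>R (y1 - y0)"
  obtains lm tau where "0 < lm" "lm < 1" "0 < tau" "tau < 1"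
    "x0 + lm *\<^sub>R (y0 - x0) = A + tau *\<^sub>R (V - A)"
proof -
  have verts3: "V \<in> verts" "ox \<in> verts" "oy \<in> verts" using x0 x1 y1 on_side_vertex by auto
  note sum3 = bary_sum_distinct[OF verts3 distinct]
  have bary_Ax: "bary v A = (1 + mx) * bary v x0 - mx * bary v x1" for v
    unfolding Ax bary_segment by (simp add: algebra_simps)
  have bary_Ay: "bary v A = (1 + my) * bary v y0 - my * bary v y1" for v
    unfolding Ay bary_segment by (simp add: algebra_simps)
  have on0: "bary V x0 = 0" "bary V y0 = 0" "bary ox x1 = 0" "bary oy y1 = 0"
    using x0 y0 x1 y1 on_side_bary_0 by auto
  have pos1: "bary V x1 > 0" "bary V y1 > 0"
    using on_side_bary_pos[OF x1, of V] on_side_bary_pos[OF y1, of V] verts3 distinct by auto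
  have pos0: "bary ox x0 > 0" "bary oy y0 > 0"
    using on_side_bary_pos[OF x0, of ox] on_side_bary_pos[OF y0, of oy] verts3 distinct by auto
  have lt1: "bary V x1 < 1" "bary V y1 < 1"
    using sum3[of x1] sum3[of y1] on0 on_side_bary_pos[OF x1, of oy] on_side_bary_pos[OF y1, of ox]
      verts3 distinct by auto
  define al where "al = bary V A"
  have al_x: "al = - mx * bary V x1" unfolding al_def bary_Ax using on0 by simp
  have al_y: "al = - my * bary V y1" unfolding al_def bary_Ay using on0 by simp
  have al0: "al < 0" using al_x pos pos1 by (simp add: mult_pos_pos)
  define tau where "tau = - al / (1 - al)"
  have tau: "0 < tau" "tau < 1" using al0 by (simp_all add: tau_def field_simps)
  have omt: "1 - tau = 1 / (1 - al)" using al0 by (simp add: tau_def field_simps)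
  define W where "W = A + tau *\<^sub>R (V - A)"
  have bary_W: "bary v W = (1 - tau) * bary v A + tau * bary v V" for v
    unfolding W_def bary_segment by simp
  have bary_V: "bary V V = 1" "bary ox V = 0" "bary oy V = 0"
    using bary_vertex verts3 distinct by auto
  have WV: "bary V W = 0"
    unfolding bary_W omt bary_V al_def[symmetric] using al0 by (simp add: tau_def field_simps)
  define fx fy fW where "fx = bary ox x0" and "fy = bary ox y0" and "fW = bary ox W"
  have fyo: "bary oy y0 = 1 - fy" using sum3[of y0] on0 unfolding fy_def by simp
  have fWo: "bary oy W = 1 - fW" using sum3[of W] WV unfolding fW_def by simp
  have fW_x: "fW = (1 + mx) * fx / (1 + mx * bary V x1)"
    unfolding fW_def fx_def bary_W bary_V omt using bary_Ax on0 al_x by simp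
  have gW_y: "1 - fW = (1 + my) * (1 - fy) / (1 + my * bary V y1)"
    unfolding fWo[symmetric] fyo[symmetric] bary_W bary_V omt using bary_Ay on0 al_y by simp
  have fx_lt: "fx < fW"
  proof -
    have "1 + mx * bary V x1 < 1 + mx" using pos lt1 by simp
    moreover have "1 + mx * bary V x1 > 0" using pos pos1 by (simp add: add_pos_pos)
    moreover have "fx > 0" using pos0 fx_def by simp
    ultimately show ?thesis unfolding fW_x by (simp add: field_simps)
  qed
  have fy_gt: "fW < fy"
  proof -
    have "1 + my * bary V y1 < 1 + my" using pos lt1 by simp
    moreover have den: "1 + my * bary V y1 > 0" using pos pos1 by (simp add: add_pos_pos)
    moreover have "1 - fy > 0" using pos0 fyo by simp
    ultimately have "(1 - fy) * (1 + my * bary V y1) < (1 - fy) * (1 + my)"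
      by (simp add: mult_strict_left_mono)
    then have "1 - fy < 1 - fW" unfolding gW_y
      using den by (simp add: pos_less_divide_eq mult.commute)
    then show ?thesis by simp
  qed
  define lm where "lm = (fW - fx) / (fy - fx)"
  have lm: "0 < lm" "lm < 1" using fx_lt fy_gt by (simp_all add: lm_def field_simps)
  have "W = x0 + lm *\<^sub>R (y0 - x0)"
  proof (rule bary_ext_distinct[OF verts3 distinct])
    show "bary V W = bary V (x0 + lm *\<^sub>R (y0 - x0))" unfolding bary_segment WV on0 by simp
    have "(1 - lm) * fx + lm * fy = fx + lm * (fy - fx)" by (simp add: algebra_simps)
    also have "\<dots> = fW" using fx_lt fy_gt by (simp add: lm_def)
    finally have "(1 - lm) * fx + lm * fy = fW" .
    then show ox: "bary ox W = bary ox (x0 + lm *\<^sub>R (y0 - x0))"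
      unfolding bary_segment fW_def[symmetric] fx_def[symmetric] fy_def[symmetric] by simp
    show "bary oy W = bary oy (x0 + lm *\<^sub>R (y0 - x0))"
      using sum3[of W] sum3[of "x0 + lm *\<^sub>R (y0 - x0)"] ox unfolding bary_segment WV on0 by simp
  qed
  then show ?thesis using that lm tau unfolding W_def by simp
qed

lemma reflect_seq_back_to_start:
  assumes "reflect_seq cs u = a + s *\<^sub>R d" "reflect_seq cs v = a + s' *\<^sub>R d" "s < s'"
  shows "reflect_seq cs (u + (- (s / (s' - s))) *\<^sub>R (v - u)) = a"
proof -
  have shift: "reflect_seq cs (u + r *\<^sub>R (v - u)) = a + (s + r * (s' - s)) *\<^sub>R d" for r
  proof -
    have "reflect_seq cs (u + r *\<^sub>R (v - u))
      = (a + s *\<^sub>R d) + r *\<^sub>R ((a + s' *\<^sub>R d) - (a + s *\<^sub>R d))"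
      by (simp only: reflect_seq_affine assms(1,2))
    then show ?thesis by (simp add: algebra_simps)
  qed
  have "s + (- (s / (s' - s))) * (s' - s) = 0" using assms(3) by simp
  then show ?thesis using shift[of "- (s / (s' - s))"] by simp
qed

text \<open>The two unfolded trajectories both start at a, so pulling a back along cs gives the
  common point A of the preceding lemma.\<close>

lemma reflect_seq_vertex_between:
  assumes on: "on_side V x0" "on_side V y0" "on_side ox x1" "on_side oy y1"
    and distinct: "V \<noteq> ox" "V \<noteq> oy" "ox \<noteq> oy"
    and s: "0 < s0" "s0 < s1" and t: "0 < t0" "t0 < t1"
    and ux: "reflect_seq cs x0 = a + s0 *\<^sub>R dx" "reflect_seq cs x1 = a + s1 *\<^sub>R dx"
    and uy: "reflect_seq cs y0 = a + t0 *\<^sub>R dy" "reflect_seq cs y1 = a + t1 *\<^sub>R dy"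
  obtains lm tau where "0 < lm" "lm < 1" "0 < tau" "tau < 1"
    "reflect_seq cs V = a + (1 / tau) *\<^sub>R (((1 - lm) * s0) *\<^sub>R dx + (lm * t0) *\<^sub>R dy)"
proof -
  define A where "A = x0 + (- (s0 / (s1 - s0))) *\<^sub>R (x1 - x0)"
  have A: "reflect_seq cs A = a" unfolding A_def by (rule reflect_seq_back_to_start[OF ux s(2)])
  moreover have "reflect_seq cs (y0 + (- (t0 / (t1 - t0))) *\<^sub>R (y1 - y0)) = a"
    by (rule reflect_seq_back_to_start[OF uy t(2)])
  ultimately have A_y: "A = y0 + (- (t0 / (t1 - t0))) *\<^sub>R (y1 - y0)" by (metis reflect_seq_inj)
  have pos: "s0 / (s1 - s0) > 0" "t0 / (t1 - t0) > 0" using s t by simp_all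
  obtain lm tau where lm: "0 < lm" "lm < 1" and tau: "0 < tau" "tau < 1"
    and W: "x0 + lm *\<^sub>R (y0 - x0) = A + tau *\<^sub>R (V - A)"
    using segment_to_vertex_crosses_side[OF on distinct pos A_def A_y] by blast
  have "V = A + (1 / tau) *\<^sub>R ((x0 + lm *\<^sub>R (y0 - x0)) - A)" unfolding W using tau by simp
  then have "reflect_seq cs V = a + (1 / tau) *\<^sub>R (reflect_seq cs (x0 + lm *\<^sub>R (y0 - x0)) - a)"
    using reflect_seq_affine A by metis
  also have "reflect_seq cs (x0 + lm *\<^sub>R (y0 - x0)) - a = ((1 - lm) * s0) *\<^sub>R dx + (lm * t0) *\<^sub>R dy"
    unfolding reflect_seq_affine ux(1) uy(1) by (simp add: algebra_simps)
  finally show ?thesis using that lm tau by blast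
qed

lemma first_side_divergence:
  assumes gx: "gen_diag a b c zx k" and gy: "gen_diag a b c zy k"
    and ne: "side_seq zx k \<noteq> side_seq zy k"
  obtains J where "1 \<le> J" "J < k" "take J (side_seq zx k) = take J (side_seq zy k)"
    "opp_vertex (zx ! Suc J) \<noteq> opp_vertex (zy ! Suc J)"
proof -
  define osx osy where "osx = side_seq zx k" and "osy = side_seq zy k"
  have len: "length osx = k" "length osy = k" by (simp_all add: osx_def osy_def length_side_seq)
  have "\<exists>i. i < k \<and> osx ! i \<noteq> osy ! i"
    using ne len nth_equalityI unfolding osx_def[symmetric] osy_def[symmetric] by metis
  then obtain J where J: "J < k" "osx ! J \<noteq> osy ! J"
    and least: "\<And>i. i < J \<Longrightarrow> osx ! i = osy ! i"
    unfolding exists_least_iff[of "\<lambda>i. i < k \<and> osx ! i \<noteq> osy ! i"] by auto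
  have nth_osx: "osx ! i = opp_vertex (zx ! Suc i)" and nth_osy: "osy ! i = opp_vertex (zy ! Suc i)"
    if "i < k" for i
    using that nth_side_seq by (simp_all add: osx_def osy_def)
  have "osx ! 0 = osy ! 0"
    using nth_osx[of 0] nth_osy[of 0] J(1) gen_diag_first_side[OF gx] gen_diag_first_side[OF gy]
      by simp
  then have "J \<noteq> 0" using J(2) by (cases J) auto
  moreover have "take J osx = take J osy"
    using J len least by (intro nth_equalityI) simp_all
  ultimately show ?thesis
    using J nth_osx[of J] nth_osy[of J] unfolding osx_def osy_def by (intro that[of J]) auto
qed

text \<open>The ray from a towards the unfolded vertex crosses the i-th unfolded side at the
  point of the segment between the unfolded i-th points of the two trajectories computed by
  ray_interpolation; folding these crossing points back gives the new diagonal.\<close>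

lemma diagonal_from_common_prefix:
  assumes len: "length cs = J" and J1: "1 \<le> J" and first: "cs ! 0 = a"
    and sides: "\<And>i. 1 \<le> i \<Longrightarrow> i \<le> J
      \<Longrightarrow> on_side (cs ! (i - 1)) (zx ! i) \<and> on_side (cs ! (i - 1)) (zy ! i)"
    and sides_distinct: "\<And>i. 1 \<le> i \<Longrightarrow> i < J \<Longrightarrow> cs ! (i - 1) \<noteq> cs ! i"
    and sx: "strict_mono sx" "sx 0 = 0" and sy: "strict_mono sy" "sy 0 = 0"
    and ux: "\<And>i. i \<le> J \<Longrightarrow> reflect_seq (take i cs) (zx ! i) = a + sx i *\<^sub>R dx"
    and uy: "\<And>i. i \<le> J \<Longrightarrow> reflect_seq (take i cs) (zy ! i) = a + sy i *\<^sub>R dy"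
    and lm: "0 < lm" "lm < 1" and tau: "0 < tau" "tau < 1"
    and vertex: "reflect_seq cs (cs ! (J - 1))
      = a + (1 / tau) *\<^sub>R (((1 - lm) * sx J) *\<^sub>R dx + (lm * sy J) *\<^sub>R dy)"
  obtains ws l where "gen_diag a b c ws J" "0 < l" "l < 1"
    "ws ! 1 = zx ! 1 + l *\<^sub>R (zy ! 1 - zx ! 1)"
proof -
  have sx_pos: "sx i > 0" and sy_pos: "sy i > 0" if "1 \<le> i" for i
    using that strict_monoD[OF sx(1), of 0 i] strict_monoD[OF sy(1), of 0 i] sx(2) sy(2) by simp_all
  define P Q where "P = (1 - lm) * sx J" and "Q = lm * sy J"
  have PQ: "P > 0" "Q > 0" using lm sx_pos[OF J1] sy_pos[OF J1] by (simp_all add: P_def Q_def)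
  define e where "e = P *\<^sub>R dx + Q *\<^sub>R dy"
  define \<kappa> where "\<kappa> i = (if i
    = 0 then 0 else if i \<le> J then 1 / (P / sx i + Q / sy i) else 1 / tau)" for i
  define l where "l i = \<kappa> i * Q / sy i" for i
  define w where "w i = (if i
    = 0 then a else if i \<le> J then zx ! i + l i *\<^sub>R (zy ! i - zx ! i) else cs ! (J - 1))"
    for i
  have interp: "0 < l i" "l i < 1" "(1 - l i) * sx i = \<kappa> i * P" if "1 \<le> i" "i \<le> J" for i
    using ray_interpolation[OF sx_pos[OF that(1)] sy_pos[OF that(1)] PQ] that
    unfolding l_def \<kappa>_def by simp_all
  have l_sy: "l i * sy i = \<kappa> i * Q" if "1 \<le> i" for i using sy_pos[OF that] by (simp add: l_def)
  have \<kappa>J: "\<kappa> J = 1"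
    using J1 sx_pos[OF J1] sy_pos[OF J1] lm by (simp add: \<kappa>_def P_def Q_def field_simps)
  have mono: "\<kappa> i < \<kappa> (Suc i)" if i: "i \<le> J" for i
  proof -
    consider "i = 0" | "1 \<le> i" "i < J" | "i = J" using i by linarith
    then show ?thesis
    proof cases
      case 1
      then show ?thesis using PQ sx_pos[of 1] sy_pos[of 1] J1 by (simp add: \<kappa>_def add_pos_pos)
    next
      case 2
      have "P / sx (Suc i) < P / sx i" "Q / sy (Suc i) < Q / sy i"
        using PQ sx_pos[OF 2(1)] sy_pos[OF 2(1)] strict_monoD[OF sx(1), of i "Suc i"]
          strict_monoD[OF sy(1), of i "Suc i"] by (simp_all add: divide_strict_left_mono)
      then show ?thesis
        using 2 PQ sx_pos[of "Suc i"] sy_pos[of "Suc i"] by (simp add: \<kappa>_def frac_less2 add_pos_pos)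
    next
      case 3
      then show ?thesis using \<kappa>J tau by (simp add: \<kappa>_def)
    qed
  qed
  have unf: "reflect_seq (take i cs) (w i) = a + \<kappa> i *\<^sub>R e" if "i \<le> J" for i
  proof (cases "i = 0")
    case True
    then show ?thesis by (simp add: w_def \<kappa>_def)
  next
    case False
    then have i: "1 \<le> i" "i \<le> J" using that by simp_all
    have "reflect_seq (take i cs) (w i)
      = (a + sx i *\<^sub>R dx) + l i *\<^sub>R ((a + sy i *\<^sub>R dy) - (a + sx i *\<^sub>R dx))"
      unfolding w_def using i by (simp add: reflect_seq_affine ux uy)
    also have "\<dots> = a + ((1 - l i) * sx i) *\<^sub>R dx + (l i * sy i) *\<^sub>R dy" by (simp add: algebra_simps)
    also have "\<dots> = a + \<kappa> i *\<^sub>R e"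
      unfolding interp(3)[OF i] l_sy[OF i(1)] by (simp add: e_def scaleR_add_right)
    finally show ?thesis .
  qed
  have on_sides: "on_side (cs ! (i - 1)) (w i)" if "1 \<le> i" "i \<le> J" for i
    using on_side_segment[of _ "zx ! i" "zy ! i" "l i"] sides[OF that] interp[OF that] that
    by (simp add: w_def)
  have "gen_diag a b c (map w [0..<J+2]) J"
  proof (rule gen_diag_of_unfolding[OF len J1 first on_sides sides_distinct _ _ mono unf])
    show "w 0 = a" "w (Suc J) = cs ! (J - 1)" by (simp_all add: w_def)
    show "reflect_seq cs (w (Suc J)) = a + \<kappa> (Suc J) *\<^sub>R e"
      using vertex by (simp add: w_def \<kappa>_def e_def P_def Q_def)
  qed
  moreover have "map w [0..<J+2] ! 1 = zx ! 1 + l 1 *\<^sub>R (zy ! 1 - zx ! 1)"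
    using J1 by (simp add: w_def del: upt_Suc)
  ultimately show ?thesis using that interp[of 1] J1 by blast
qed

lemma gen_diag_between:
  assumes gx: "gen_diag a b c zx k" and gy: "gen_diag a b c zy k"
    and ne: "side_seq zx k \<noteq> side_seq zy k"
  obtains J ws l where "J < k" "gen_diag a b c ws J" "0 < l" "l < 1"
    "ws ! 1 = zx ! 1 + l *\<^sub>R (zy ! 1 - zx ! 1)"
proof -
  obtain J where J: "1 \<le> J" "J < k" and common: "take J (side_seq zx k) = take J (side_seq zy k)"
    and split: "opp_vertex (zx ! Suc J) \<noteq> opp_vertex (zy ! Suc J)"
    using first_side_divergence[OF gx gy ne] by blast
  define cs where "cs = take J (side_seq zx k)"
  have cs_y_def: "cs = take J (side_seq zy k)" using common by (simp add: cs_def)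
  have len: "length cs = J" using J by (simp add: cs_def length_side_seq)
  have cs_x: "cs ! (i - 1) = opp_vertex (zx ! i)" if "1 \<le> i" "i \<le> J" for i
    using that J nth_side_seq[of "i - 1" k zx] by (simp add: cs_def)
  have cs_y: "cs ! (i - 1) = opp_vertex (zy ! i)" if "1 \<le> i" "i \<le> J" for i
    using that J nth_side_seq[of "i - 1" k zy] by (simp add: cs_y_def)
  obtain sx where sx: "sx 0 = 0" "strict_mono sx"
    "\<And>i. i \<le> J \<Longrightarrow> reflect_seq (take i cs) (zx ! i) = a + sx i *\<^sub>R (zx ! 1 - a)"
    "reflect_seq cs (zx ! Suc J) = a + sx (Suc J) *\<^sub>R (zx ! 1 - a)"
    using gen_diag_unfolding_prefix[OF gx J(2)] unfolding cs_def[symmetric] by blast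
  obtain sy where sy: "sy 0 = 0" "strict_mono sy"
    "\<And>i. i \<le> J \<Longrightarrow> reflect_seq (take i cs) (zy ! i) = a + sy i *\<^sub>R (zy ! 1 - a)"
    "reflect_seq cs (zy ! Suc J) = a + sy (Suc J) *\<^sub>R (zy ! 1 - a)"
    using gen_diag_unfolding_prefix[OF gy J(2)] unfolding cs_y_def[symmetric] by blast
  have on_x: "on_side (cs ! (i - 1)) (zx ! i)" and on_y: "on_side (cs ! (i - 1)) (zy ! i)"
    if "1 \<le> i" "i \<le> J" for i
    using gen_diag_on_side[OF gx, of i] gen_diag_on_side[OF gy, of i] cs_x[OF that] cs_y[OF that]
      that J
    by simp_all
  define V where "V = cs ! (J - 1)"
  have on: "on_side V (zx ! J)" "on_side V (zy ! J)"
    "on_side (opp_vertex (zx ! Suc J)) (zx ! Suc J)"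
      "on_side (opp_vertex (zy ! Suc J)) (zy ! Suc J)"
    using on_x[of J] on_y[of J] gen_diag_on_side[OF gx, of "Suc J"] gen_diag_on_side[OF gy, of "Suc
      J"] J
    by (simp_all add: V_def)
  have distinct: "V \<noteq> opp_vertex (zx ! Suc J)" "V \<noteq> opp_vertex (zy ! Suc J)"
    using gen_diag_sides_distinct[OF gx, of J] gen_diag_sides_distinct[OF gy, of J] cs_x[of J]
      cs_y[of J] J
    by (simp_all add: V_def)
  have s: "0 < sx J" "sx J < sx (Suc J)" "0 < sy J" "sy J < sy (Suc J)"
    using strict_monoD[OF sx(2), of 0 J] strict_monoD[OF sy(2), of 0 J] sx(1,2) sy(1,2) J
    by (simp_all add: strict_mono_Suc_iff)
  obtain lm tau where lm: "0 < lm" "lm < 1" and tau: "0 < tau" "tau < 1"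
    and vertex: "reflect_seq cs V
      = a + (1 / tau) *\<^sub>R (((1 - lm) * sx J) *\<^sub>R (zx ! 1 - a) + (lm * sy J) *\<^sub>R (zy ! 1 - a))"
  proof -
    have "reflect_seq cs (zx ! J) = a + sx J *\<^sub>R (zx ! 1 - a)"
      "reflect_seq cs (zy ! J) = a + sy J *\<^sub>R (zy ! 1 - a)"
      using sx(3)[of J] sy(3)[of J] len by simp_all
    then show ?thesis
      using reflect_seq_vertex_between[OF on distinct split s] sx(4) sy(4) that by blast
  qed
  have first: "cs ! 0 = a" using cs_x[of 1] J gen_diag_first_side[OF gx] by simp
  have sides_distinct: "cs ! (i - 1) \<noteq> cs ! i" if "1 \<le> i" "i < J" for i
    using gen_diag_sides_distinct[OF gx, of i] cs_x[of i] cs_x[of "Suc i"] that J by simp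
  obtain ws l where "gen_diag a b c ws J" "0 < l" "l < 1"
    "ws ! 1 = zx ! 1 + l *\<^sub>R (zy ! 1 - zx ! 1)"
    using diagonal_from_common_prefix[OF len J(1) first _ sides_distinct sx(2,1) sy(2,1) sx(3) sy(3)
      lm tau]
      on_x on_y vertex unfolding V_def by blast
  then show ?thesis using that J(2) by blast
qed

lemma cut_point_between:
  assumes hx: "has_index a b c x (Suc m)" and hy: "has_index a b c y (Suc m)" and xy: "x < y"
  shows "\<exists>z. (\<exists>p\<le>m. has_index a b c z p) \<and> x < z \<and> z < y"
proof -
  obtain zx where zx: "gen_diag a b c zx (Suc m)" "x = ang_coord a b c (zx ! 1 - a)"
    using hx unfolding has_index_def by blast
  obtain zy where zy: "gen_diag a b c zy (Suc m)" "y = ang_coord a b c (zy ! 1 - a)"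
    using hy unfolding has_index_def by blast
  have ne: "side_seq zx (Suc m) \<noteq> side_seq zy (Suc m)"
    using ang_coord_eq_if_side_seq_eq[OF zx(1) zy(1)] zx(2) zy(2) xy by auto
  have ox: "on_side a (zx ! 1)" and oy: "on_side a (zy ! 1)"
    using gen_diag_on_side[OF zx(1), of 1] gen_diag_first_side[OF zx(1)]
      gen_diag_on_side[OF zy(1), of 1] gen_diag_first_side[OF zy(1)] by simp_all
  have cx_lt_cy: "bary c (zx ! 1) < bary c (zy ! 1)"
  proof (rule ccontr)
    assume "\<not> ?thesis"
    then consider "bary c (zy ! 1) < bary c (zx ! 1)" | "bary c (zx ! 1) = bary c (zy ! 1)"
      by linarith
    then show False
    proof cases
      case 1
      then show False using ang_coord_strict_mono[OF oy ox] zx(2) zy(2) xy by simp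
    next
      case 2
      moreover have "bary a (zx ! 1) = 0" "bary a (zy ! 1) = 0" using ox oy on_side_bary_0 by auto
      ultimately have "zx ! 1 = zy ! 1"
        using bary_sum[of "zx ! 1"] bary_sum[of "zy ! 1"] bary_ext by simp
      then show False using zx(2) zy(2) xy by simp
    qed
  qed
  obtain J ws l where J: "J < Suc m" "gen_diag a b c ws J" and l: "0 < l" "l < 1"
    and ws1: "ws ! 1 = zx ! 1 + l *\<^sub>R (zy ! 1 - zx ! 1)"
    using gen_diag_between[OF zx(1) zy(1) ne] by blast
  have ow: "on_side a (ws ! 1)"
    using gen_diag_on_side[OF J(2), of 1] gen_diag_first_side[OF J(2)] gen_diag_ge_1[OF J(2)]
      by simp
  have "bary c (zx ! 1) < bary c (ws ! 1)" "bary c (ws ! 1) < bary c (zy ! 1)"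
    unfolding ws1 bary_segment using convex_comb_between[OF cx_lt_cy l] by simp_all
  then have "x < ang_coord a b c (ws ! 1 - a)" "ang_coord a b c (ws ! 1 - a) < y"
    using ang_coord_strict_mono[OF ox ow] ang_coord_strict_mono[OF ow oy] zx(2) zy(2) by simp_all
  moreover have "\<exists>p\<le>m. has_index a b c (ang_coord a b c (ws ! 1 - a)) p"
    unfolding has_index_def using J less_Suc_eq_le by blast
  ultimately show ?thesis by blast
qed

end

section \<open>Counting cutting points\<close>

lemma strictly_between_commute: "strictly_between y u v \<longleftrightarrow> strictly_between y v u"
  unfolding strictly_between_def by (simp add: min.commute max.commute)

lemma finite_nearest_neighbours:
  fixes S :: "real set"
  assumes fin: "finite S" and z1: "z1 \<in> S" "z1 < x" and z2: "z2 \<in> S" "x < z2"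
  obtains u v where "u \<in> S" "v \<in> S" "z1 \<le> u" "u < x" "x < v" "v \<le> z2"
    "\<And>y. y \<in> S \<Longrightarrow> u < y \<Longrightarrow> y < v \<Longrightarrow> y = x"
proof -
  define u v where "u = Max {z \<in> S. z < x}" and "v = Min {z \<in> S. x < z}"
  have fin': "finite {z \<in> S. z < x}" "finite {z \<in> S. x < z}" using fin by simp_all
  have u: "u \<in> S" "u < x" "z1 \<le> u"
    using Max_in[OF fin'(1)] Max_ge[OF fin'(1)] z1 by (auto simp: u_def)
  have v: "v \<in> S" "x < v" "v \<le> z2"
    using Min_in[OF fin'(2)] Min_le[OF fin'(2)] z2 by (auto simp: v_def)
  have "y = x" if "y \<in> S" "u < y" "y < v" for y
  proof (rule ccontr)
    assume "y \<noteq> x"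
    then consider "y < x" | "x < y" by linarith
    then show False
    proof cases
      case 1
      then have "y \<le> u" using that Max_ge[OF fin'(1)] by (simp add: u_def)
      then show False using that by simp
    next
      case 2
      then have "v \<le> y" using that Min_le[OF fin'(2)] by (simp add: v_def)
      then show False using that by simp
    qed
  qed
  then show ?thesis using that u v by blast
qed

lemma three_ordered_elements:
  fixes S :: "real set"
  assumes fin: "finite S" and three: "card S \<ge> 3"
  obtains x1 x2 x3 where "x1 \<in> S" "x2 \<in> S" "x3 \<in> S" "x1 < x2" "x2 < x3"
proof -
  have ne: "S \<noteq> {}" using three by auto
  have "card {Min S, Max S} \<le> 2" by (simp add: card_insert_if)
  moreover have "{Min S, Max S} \<subseteq> S" using fin ne by simp
  ultimately have "card (S - {Min S, Max S}) \<noteq> 0"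
    using three card_Diff_subset[of "{Min S, Max S}" S] by simp
  then have "S - {Min S, Max S} \<noteq> {}" by (metis card.empty)
  then obtain x2 where x2: "x2 \<in> S" "x2 \<noteq> Min S" "x2 \<noteq> Max S" by blast
  have "Min S \<le> x2" "x2 \<le> Max S" using fin x2(1) by simp_all
  then have "Min S < x2" "x2 < Max S" using x2(2,3) by simp_all
  then show ?thesis using that x2(1) Min_in[OF fin ne] Max_in[OF fin ne] by blast
qed

text \<open>Every point of H that has a point of G below it is mapped injectively to the largest
  such point of G; by separation at most one point of H is left over.\<close>

lemma card_le_Suc_card_if_separated:
  fixes G H :: "real set"
  assumes finG: "finite G" and finH: "finite H"
    and sep: "\<And>x y. x \<in> H \<Longrightarrow> y \<in> H \<Longrightarrow> x < y \<Longrightarrow> \<exists>z\<in>G. x < z \<and> z < y"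
  shows "card H \<le> card G + 1"
proof -
  define H' where "H' = {x \<in> H. \<exists>z\<in>G. z < x}"
  define f where "f x = Max {z \<in> G. z < x}" for x
  have fin_below: "finite {z \<in> G. z < x}" for x using finG by simp
  have f: "f x \<in> G" "f x < x" if "x \<in> H'" for x
    using Max_in[OF fin_below, of x] that unfolding H'_def f_def by auto
  have f_max: "z \<le> f x" if "z \<in> G" "z < x" for x z
    using Max_ge[OF fin_below] that unfolding f_def by simp
  have f_less: "f x < f y" if xy: "x \<in> H'" "y \<in> H'" "x < y" for x y
  proof -
    obtain z where z: "z \<in> G" "x < z" "z < y" using sep xy unfolding H'_def by blast
    then show ?thesis using f_max[OF z(1) z(3)] f(2)[OF xy(1)] by simp
  qed
  have "inj_on f H'"
  proof (rule inj_onI)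
    fix x y assume xy: "x \<in> H'" "y \<in> H'" "f x = f y"
    show "x = y" using f_less[OF xy(1,2)] f_less[OF xy(2,1)] xy(3)
      by (cases x y rule: linorder_cases) auto
  qed
  then have "card H' \<le> card G" using card_inj_on_le[OF _ _ finG] f by blast
  moreover have "card (H - H') \<le> 1"
  proof -
    have "x = y" if xy: "x \<in> H - H'" "y \<in> H - H'" for x y
    proof (rule ccontr)
      assume "x \<noteq> y"
      then consider "x < y" | "y < x" by linarith
      then show False
      proof cases
        case 1
        then show False using sep[of x y] xy unfolding H'_def by auto
      next
        case 2
        then show False using sep[of y x] xy unfolding H'_def by auto
      qed
    qed
    then show ?thesis using card_le_Suc0_iff_eq[of "H - H'"] finH by simp
  qed
  moreover have "card H \<le> card H' + card (H - H')"
    using card_Un_le[of H' "H - H'"] by (simp add: H'_def Un_absorb1 Un_Diff_cancel)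
  ultimately show ?thesis by simp
qed

lemma interval_between_steps:
  fixes g :: "nat \<Rightarrow> real"
  assumes "g 0 < x" "x < g N"
  obtains i where "i < N" "g i < x" "x \<le> g (Suc i)"
proof -
  define I where "I = {i. i < N \<and> g i < x}"
  have "N \<noteq> 0"
  proof
    assume "N = 0"
    then show False using assms by simp
  qed
  then have "0 \<in> I" using assms(1) by (simp add: I_def)
  moreover have fin: "finite I" by (simp add: I_def)
  ultimately have i: "Max I \<in> I" "\<And>j. j \<in> I \<Longrightarrow> j \<le> Max I"
    using Max_in[OF fin] Max_ge[OF fin] by blast+
  have "\<not> g (Suc (Max I)) < x"
  proof
    assume less: "g (Suc (Max I)) < x"
    then have "Suc (Max I) \<noteq> N" using assms(2) by auto
    then have "Suc (Max I) \<in> I" using i(1) less by (simp add: I_def)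
    then show False using i(2) by fastforce
  qed
  then show ?thesis using that i(1) by (auto simp: I_def)
qed

lemma finite_set_gaps:
  fixes S :: "real set"
  assumes fin: "finite S" and S01: "S \<subseteq> {0<..<1}"
  obtains g :: "nat \<Rightarrow> real" where "g 0 = 0" "g (card S + 1) = 1"
    "\<And>i j. i \<le> j \<Longrightarrow> j \<le> card S + 1 \<Longrightarrow> g i \<le> g j"
    "\<And>i. i \<le> card S \<Longrightarrow> S \<inter> {g i<..<g (Suc i)} = {}"
    "{0<..<1} - S \<subseteq> (\<Union>i\<le>card S. {g i<..<g (Suc i)})"
proof -
  define G where "G = insert 0 (insert 1 S)"
  define N where "N = card S + 1"
  have finG: "finite G" using fin by (simp add: G_def)
  have G01: "y \<in> G \<Longrightarrow> 0 \<le> y \<and> y \<le> 1" for y using S01 by (auto simp: G_def)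
  have "0 \<notin> S" "1 \<notin> S" using S01 by auto
  then have cardG: "card G = N + 1" using fin by (simp add: G_def N_def)
  define g where "g i = sorted_list_of_set G ! i" for i
  have len: "length (sorted_list_of_set G) = N + 1" using cardG finG by simp
  have g_less: "g i < g j" if "i < j" "j \<le> N" for i j
    unfolding g_def using sorted_wrt_nth_less[OF strict_sorted_list_of_set[of G] that(1)] that len
      by simp
  have g_le: "g i \<le> g j" if "i \<le> j" "j \<le> N" for i j
    using g_less[of i j] that by (cases "i = j") auto
  have gG: "g i \<in> G" if "i \<le> N" for i
  proof -
    have "g i \<in> set (sorted_list_of_set G)" unfolding g_def using that len by simp
    then show ?thesis using finG by simp
  qed
  have Gg: "\<exists>j\<le>N. y = g j" if "y \<in> G" for y
  proof -
    have "y \<in> set (sorted_list_of_set G)" using that finG by simp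
    then obtain j where "j < N + 1" "y = g j" unfolding g_def in_set_conv_nth len by metis
    then show ?thesis by (auto intro!: exI[of _ j])
  qed
  have g0: "g 0 = 0"
  proof -
    obtain j where "j \<le> N" "0 = g j" using Gg[of 0] unfolding G_def by auto
    then show ?thesis using g_le[of 0 j] G01[OF gG[of 0]] by simp
  qed
  have g1: "g N = 1"
  proof -
    obtain j where "j \<le> N" "1 = g j" using Gg[of 1] unfolding G_def by auto
    then show ?thesis using g_le[of j N] G01[OF gG[of N]] by simp
  qed
  have empty: "S \<inter> {g i<..<g (Suc i)} = {}" if "i \<le> card S" for i
  proof (intro equalityI subsetI)
    fix y assume y: "y \<in> S \<inter> {g i<..<g (Suc i)}"
    obtain j where j: "j \<le> N" "y = g j" using Gg[of y] y unfolding G_def by auto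
    have "i < j"
    proof (rule ccontr)
      assume "\<not> i < j"
      then have "g j \<le> g i" using g_le[of j i] that by (simp add: N_def)
      then show False using y j by simp
    qed
    moreover have "j < Suc i"
    proof (rule ccontr)
      assume "\<not> j < Suc i"
      then have "g (Suc i) \<le> g j" using g_le[of "Suc i" j] j by simp
      then show False using y j by simp
    qed
    ultimately show "y \<in> {}" by simp
  qed simp
  have cover: "{0<..<1} - S \<subseteq> (\<Union>i\<le>card S. {g i<..<g (Suc i)})"
  proof
    fix x assume x: "x \<in> {0<..<1} - S"
    obtain i where i: "i < N" "g i < x" "x \<le> g (Suc i)"
      using interval_between_steps[of g x N] g0 g1 x by auto
    moreover have "g (Suc i) \<noteq> x" using gG[of "Suc i"] i(1) x by (auto simp: G_def)
    ultimately show "x \<in> (\<Union>i\<le>card S. {g i<..<g (Suc i)})" by (auto simp: N_def)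
  qed
  show ?thesis using that[OF g0 g1[unfolded N_def] g_le[unfolded N_def] empty cover] .
qed

lemma card_long_steps:
  fixes g :: "nat \<Rightarrow> real"
  assumes mono: "\<And>i. i \<le> N \<Longrightarrow> g i \<le> g (Suc i)"
  shows "real (card {i. i \<le> N \<and> L < g (Suc i) - g i}) * L \<le> g (Suc N) - g 0"
proof -
  let ?Long = "{i. i \<le> N \<and> L < g (Suc i) - g i}"
  have "real (card ?Long) * L = (\<Sum>i\<in>?Long. L)" by simp
  also have "\<dots> \<le> (\<Sum>i\<in>?Long. g (Suc i) - g i)" by (rule sum_mono) simp
  also have "\<dots> \<le> (\<Sum>i<Suc N. g (Suc i) - g i)" using mono by (intro sum_mono2) auto
  also have "\<dots> = g (Suc N) - g 0" by (rule sum_lessThan_telescope)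
  finally show ?thesis .
qed

lemma two_pow_le_exp: "(2::real) ^ k \<le> exp (real k)"
proof -
  have "(2::real) ^ k \<le> exp 1 ^ k" using exp_ge_add_one_self[of 1] by (intro power_mono) simp_all
  then show ?thesis by (simp add: exp_of_nat_mult[symmetric])
qed

locale nested_partitions =
  fixes idx :: "real \<Rightarrow> nat \<Rightarrow> bool"
  assumes idx_range: "idx x p \<Longrightarrow> 0 < x \<and> x < 1"
    and idx_separated: "idx x (Suc m) \<Longrightarrow> idx y (Suc m) \<Longrightarrow> x < y \<Longrightarrow>
      \<exists>z. (\<exists>p\<le>m. idx z p) \<and> x < z \<and> z < y"
begin

definition cuts :: "nat \<Rightarrow> real set" where
  "cuts m = {x. \<exists>p\<le>m. idx x p}"

definition good :: "real \<Rightarrow> nat \<Rightarrow> real \<Rightarrow> nat \<Rightarrow> real \<Rightarrow> nat \<Rightarrow> bool" where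
  "good xp p xq q xr r \<longleftrightarrow> idx xp p \<and> idx xq q \<and> idx xr r \<and> p < q \<and> q < r \<and>
     strictly_between xr xp xq \<and> (\<forall>y\<in>cuts r. strictly_between y xp xq \<longrightarrow> y = xr)"

definition good_triple_in :: "nat \<Rightarrow> nat \<Rightarrow> real \<Rightarrow> real \<Rightarrow> bool" where
  "good_triple_in n k lo up \<longleftrightarrow> (\<exists>u p v q x r. good u p v q x r \<and>
     p \<in> {n+1..n+k} \<and> q \<in> {n+1..n+k} \<and> r \<in> {n+1..n+k} \<and>
     u \<in> {lo<..<up} \<and> v \<in> {lo<..<up} \<and> x \<in> {lo<..<up})"

lemma cuts_mono: "m \<le> m' \<Longrightarrow> cuts m \<subseteq> cuts m'"
  unfolding cuts_def using le_trans by blast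

lemma cutsI: "idx x p \<Longrightarrow> p \<le> m \<Longrightarrow> x \<in> cuts m"
  unfolding cuts_def by blast

lemma cuts_range: "x \<in> cuts m \<Longrightarrow> 0 < x \<and> x < 1"
  unfolding cuts_def using idx_range by blast

lemma cut_between:
  "idx x (Suc m) \<Longrightarrow> idx y (Suc m) \<Longrightarrow> x < y \<Longrightarrow> \<exists>z\<in>cuts m. x < z \<and> z < y"
  using idx_separated unfolding cuts_def by blast

lemma same_index_unique_in_gap:
  assumes gap: "\<And>z. u < z \<Longrightarrow> z < v \<Longrightarrow> z \<notin> cuts m"
    and x: "idx x (Suc m)" "u < x" "x < v" and y: "idx y (Suc m)" "u < y" "y < v"
  shows "x = y"
proof (rule ccontr)
  assume "x \<noteq> y"
  then consider "x < y" | "y < x" by linarith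
  then show False
  proof cases
    case 1
    then obtain z where "z \<in> cuts m" "x < z" "z < y" using cut_between[OF x(1) y(1)] by blast
    then show False using gap[of z] x(2) y(3) by simp
  next
    case 2
    then obtain z where "z \<in> cuts m" "y < z" "z < x" using cut_between[OF y(1) x(1)] by blast
    then show False using gap[of z] y(2) x(3) by simp
  qed
qed

text \<open>The nearest neighbours of x in the partition of level r - 1 form a good triple with x;
  their indices exceed n because the gap contains no cutting point of level n.\<close>

lemma good_triple_at_new_cut:
  assumes fin: "finite (cuts (n + k))" and empty: "cuts n \<inter> {lo<..<up} = {}"
    and r: "n < r" "r \<le> n + k"
    and x: "x \<in> {lo<..<up}" "idx x r" "x \<notin> cuts (r - 1)"
    and z1: "z1 \<in> cuts (r - 1)" "lo < z1" "z1 < x"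
    and z2: "z2 \<in> cuts (r - 1)" "x < z2" "z2 < up"
  shows "good_triple_in n k lo up"
proof -
  have r_Suc: "r = Suc (r - 1)" using r by simp
  have fin_r: "finite (cuts (r - 1))" using finite_subset[OF cuts_mono fin] r by simp
  obtain u v where u: "u \<in> cuts (r - 1)" "z1 \<le> u" "u < x" and v: "v \<in> cuts (r - 1)" "x < v" "v \<le> z2"
    and nearest: "\<And>y. y \<in> cuts (r - 1) \<Longrightarrow> u < y \<Longrightarrow> y < v \<Longrightarrow> y = x"
    using finite_nearest_neighbours[OF fin_r z1(1,3) z2(1,2)] by blast
  have gap: "y \<notin> cuts (r - 1)" if "u < y" "y < v" for y using nearest that x(3) by blast
  have uv: "u \<in> {lo<..<up}" "v \<in> {lo<..<up}" using u v z1 z2 x(1) by auto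
  obtain p q where p: "p \<le> r - 1" "idx u p" and q: "q \<le> r - 1" "idx v q"
    using u(1) v(1) unfolding cuts_def by blast
  have pq: "n < p" "n < q"
    using cutsI[OF p(2), of n] cutsI[OF q(2), of n] empty uv by (auto simp: not_less)
  have "p \<noteq> q"
  proof
    assume "p = q"
    then obtain z where "z \<in> cuts (p - 1)" "u < z" "z < v"
      using cut_between[of u "p - 1" v] p q pq u(3) v(2) by auto
    moreover have "cuts (p - 1) \<subseteq> cuts (r - 1)" using p by (intro cuts_mono) simp
    ultimately show False using gap by blast
  qed
  have only: "y = x" if y: "y \<in> cuts r" "strictly_between y u v" for y
  proof -
    have uyv: "u < y" "y < v" using y(2) u(3) v(2) by (simp_all add: strictly_between_def)
    then have y_new: "y \<notin> cuts (r - 1)" by (rule gap)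
    obtain s where s: "s \<le> r" "idx y s" using y(1) unfolding cuts_def by blast
    have "s = r"
    proof (rule ccontr)
      assume "s \<noteq> r"
      then have "y \<in> cuts (r - 1)" using cutsI[OF s(2), of "r - 1"] s(1) by simp
      then show False using y_new by simp
    qed
    then have idx: "idx y (Suc (r - 1))" "idx x (Suc (r - 1))"
      using s(2) x(2) r_Suc[symmetric] by simp_all
    show "y = x" using same_index_unique_in_gap[OF gap idx(1) uyv idx(2) u(3) v(2)] .
  qed
  have sb: "strictly_between x u v" "strictly_between x v u"
    using u(3) v(2) by (simp_all add: strictly_between_def)
  have ranges: "p \<in> {n+1..n+k}" "q \<in> {n+1..n+k}" "r \<in> {n+1..n+k}" using p q pq r by auto
  consider "p < q" | "q < p" using \<open>p \<noteq> q\<close> by linarith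
  then show ?thesis
  proof cases
    case 1
    then have "good u p v q x r" unfolding good_def using p q x(2) sb only r by auto
    then show ?thesis unfolding good_triple_in_def using ranges uv x(1) by blast
  next
    case 2
    then have "good v q u p x r"
      unfolding good_def using p q x(2) sb only r strictly_between_commute by auto
    then show ?thesis unfolding good_triple_in_def using ranges uv x(1) by blast
  qed
qed

lemma card_new_cuts_in_gap_le_2:
  assumes fin: "finite (cuts (n + k))" and empty: "cuts n \<inter> {lo<..<up} = {}"
    and r: "n < r" "r \<le> n + k" and no_good: "\<not> good_triple_in n k lo up"
  shows "card {x \<in> {lo<..<up}. idx x r \<and> x \<notin> cuts (r - 1)} \<le> 2"
proof (rule ccontr)
  let ?A = "{x \<in> {lo<..<up}. idx x r \<and> x \<notin> cuts (r - 1)}"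
  assume "\<not> card ?A \<le> 2"
  then have "card ?A \<ge> 3" by simp
  moreover have "?A \<subseteq> cuts (n + k)" using r by (auto intro: cutsI)
  then have "finite ?A" using fin by (rule finite_subset)
  ultimately obtain x1 x2 x3 where xs: "x1 \<in> ?A" "x2 \<in> ?A" "x3 \<in> ?A" "x1 < x2" "x2 < x3"
    using three_ordered_elements by blast
  have idx: "idx x1 (Suc (r - 1))" "idx x2 (Suc (r - 1))" "idx x3 (Suc (r - 1))" using xs r by auto
  obtain z1 where z1: "z1 \<in> cuts (r - 1)" "x1 < z1" "z1 < x2"
    using cut_between[OF idx(1,2) xs(4)] by blast
  obtain z2 where z2: "z2 \<in> cuts (r - 1)" "x2 < z2" "z2 < x3"
    using cut_between[OF idx(2,3) xs(5)] by blast
  have "lo < z1" "z2 < up" using xs(1,3) z1(2) z2(3) by auto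
  then have "good_triple_in n k lo up"
    using good_triple_at_new_cut[OF fin empty r, of x2 z1 z2] xs(2) z1 z2 by simp
  then show False using no_good by simp
qed

lemma card_cuts_in_gap_le:
  assumes fin: "finite (cuts (n + k))" and empty: "cuts n \<inter> {lo<..<up} = {}"
    and no_good: "\<not> good_triple_in n k lo up"
  shows "card (cuts (n + k) \<inter> {lo<..<up}) \<le> 2 * k"
proof -
  let ?A = "\<lambda>r. {x \<in> {lo<..<up}. idx x r \<and> x \<notin> cuts (r - 1)}"
  have "cuts (n + k) \<inter> {lo<..<up} \<subseteq> (\<Union>r\<in>{n+1..n+k}. ?A r)"
  proof
    fix y assume y: "y \<in> cuts (n + k) \<inter> {lo<..<up}"
    then obtain p where p: "p \<le> n + k" "idx y p" unfolding cuts_def by blast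
    define s where "s = (LEAST s. idx y s)"
    have s: "idx y s" "s \<le> p" unfolding s_def using p(2) by (auto intro: LeastI Least_le)
    have "n < s" using cutsI[OF s(1), of n] empty y by (auto simp: not_less)
    moreover have "y \<notin> cuts (s - 1)"
    proof
      assume "y \<in> cuts (s - 1)"
      then obtain t where "t \<le> s - 1" "idx y t" unfolding cuts_def by blast
      moreover have "s \<le> t" unfolding s_def using \<open>idx y t\<close> by (rule Least_le)
      ultimately show False using \<open>n < s\<close> by simp
    qed
    ultimately show "y \<in> (\<Union>r\<in>{n+1..n+k}. ?A r)" using y s p(1) by auto
  qed
  moreover have "finite (?A r)" if "r \<in> {n+1..n+k}" for r
  proof -
    have "?A r \<subseteq> cuts (n + k)" using that by (auto intro: cutsI)
    then show ?thesis using fin by (rule finite_subset)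
  qed
  ultimately have "card (cuts (n + k) \<inter> {lo<..<up}) \<le> card (\<Union>r\<in>{n+1..n+k}. ?A r)"
    by (intro card_mono) auto
  also have "\<dots> \<le> (\<Sum>r\<in>{n+1..n+k}. card (?A r))" by (rule card_UN_le) simp
  also have "\<dots> \<le> (\<Sum>r\<in>{n+1..n+k}. 2)"
    using card_new_cuts_in_gap_le_2[OF fin empty _ _ no_good] by (intro sum_mono) auto
  finally show ?thesis by simp
qed

lemma card_cuts_in_gap_doubling:
  assumes fin: "finite (cuts (n + k))" and empty: "cuts n \<inter> {lo<..<up} = {}" and "i \<le> k"
  shows "card (cuts (n + i) \<inter> {lo<..<up}) \<le> 2 ^ i - 1"
  using \<open>i \<le> k\<close>
proof (induction i)
  case 0
  then show ?case using empty by simp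
next
  case (Suc i)
  let ?G = "cuts (n + i) \<inter> {lo<..<up}"
  let ?H = "{x \<in> {lo<..<up}. idx x (Suc (n + i))}"
  have finG: "finite ?G" using finite_subset[OF cuts_mono fin] Suc.prems by auto
  have "?H \<subseteq> cuts (n + k)" using Suc.prems by (auto intro: cutsI)
  then have finH: "finite ?H" using fin by (rule finite_subset)
  have H_le: "card ?H \<le> card ?G + 1"
  proof (rule card_le_Suc_card_if_separated[OF finG finH])
    fix x y assume "x \<in> ?H" "y \<in> ?H" "x < y"
    then obtain z where "z \<in> cuts (n + i)" "x < z" "z < y" using cut_between[of x "n + i" y] by auto
    then show "\<exists>z\<in>?G. x < z \<and> z < y" using \<open>x \<in> ?H\<close> \<open>y \<in> ?H\<close> by auto
  qed
  have "cuts (n + Suc i) \<inter> {lo<..<up} \<subseteq> ?G \<union> ?H"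
    unfolding cuts_def by (auto simp: le_Suc_eq)
  then have "card (cuts (n + Suc i) \<inter> {lo<..<up}) \<le> card (?G \<union> ?H)"
    using finG finH by (intro card_mono) auto
  also have "\<dots> \<le> card ?G + card ?H" by (rule card_Un_le)
  also have "\<dots> \<le> 2 * card ?G + 1" using H_le by simp
  also have "\<dots> \<le> 2 * (2 ^ i - 1) + 1" using Suc by simp
  also have "\<dots> = 2 ^ Suc i - 1"
  proof -
    have "1 \<le> (2::nat) ^ i" by simp
    then show ?thesis by (simp only: power_Suc)
  qed
  finally show ?case .
qed

text \<open>Counting the new cutting points gap by gap: a gap of the partition of level n that is
  shorter than L contains at most 2 k of them, a longer one at most 2 ^ k, and there are at
  most 1 / L long gaps.\<close>

lemma card_cuts_bound:
  assumes fin: "finite (cuts (n + k))" and L: "L > 0"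
    and no_good: "\<And>lo up. up - lo \<le> L \<Longrightarrow> \<not> good_triple_in n k lo up"
  shows "real (card (cuts (n + k))) \<le> real (card (cuts n)) + real (card (cuts n) + 1) * (2 * k)
    + 2 ^ k / L"
proof -
  define N where "N = card (cuts n)"
  have fin_n: "finite (cuts n)" using finite_subset[OF cuts_mono fin] by simp
  have sub: "cuts n \<subseteq> cuts (n + k)" by (simp add: cuts_mono)
  have S01: "cuts n \<subseteq> {0<..<1}" using cuts_range by auto
  obtain g where g0: "g 0 = 0" and g1: "g (N + 1) = 1"
    and g_le: "\<And>i j. i \<le> j \<Longrightarrow> j \<le> N + 1 \<Longrightarrow> g i \<le> g j"
    and empty: "\<And>i. i \<le> N \<Longrightarrow> cuts n \<inter> {g i<..<g (Suc i)} = {}"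
    and cover: "{0<..<1} - cuts n \<subseteq> (\<Union>i\<le>N. {g i<..<g (Suc i)})"
    using finite_set_gaps[OF fin_n S01] unfolding N_def by blast
  define cnt where "cnt i = card (cuts (n + k) \<inter> {g i<..<g (Suc i)})" for i
  define Long where "Long = {i. i \<le> N \<and> L < g (Suc i) - g i}"
  have cnt: "cnt i \<le> 2 * k + (if i \<in> Long then 2 ^ k else 0)" if "i \<le> N" for i
  proof (cases "i \<in> Long")
    case True
    then show ?thesis using card_cuts_in_gap_doubling[OF fin empty[OF that] order_refl]
      unfolding cnt_def by simp
  next
    case False
    then show ?thesis using card_cuts_in_gap_le[OF fin empty[OF that] no_good] that
      unfolding cnt_def Long_def by simp
  qed
  have "cuts (n + k) - cuts n \<subseteq> (\<Union>i\<le>N. cuts (n + k) \<inter> {g i<..<g (Suc i)})"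
    using cover cuts_range by fastforce
  then have "card (cuts (n + k) - cuts n) \<le> card (\<Union>i\<le>N. cuts (n + k) \<inter> {g i<..<g (Suc i)})"
    using fin by (intro card_mono) auto
  also have "\<dots> \<le> (\<Sum>i\<le>N. cnt i)" unfolding cnt_def by (rule card_UN_le) simp
  also have "\<dots> \<le> (\<Sum>i\<le>N. 2 * k + (if i \<in> Long then 2 ^ k else 0))" by (rule sum_mono) (simp add: cnt)
  also have "\<dots> = (N + 1) * (2 * k) + 2 ^ k * card Long"
  proof -
    have "{..N} \<inter> Long = Long" by (auto simp: Long_def)
    then have "(\<Sum>i\<le>N. (if i \<in> Long then (2::nat) ^ k else 0)) = (\<Sum>i\<in>Long. 2 ^ k)"
      using sum.inter_restrict[of "{..N}" "\<lambda>_. (2::nat) ^ k" Long] by simp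
    then show ?thesis by (simp add: sum.distrib)
  qed
  finally have "card (cuts (n + k)) - N \<le> (N + 1) * (2 * k) + 2 ^ k * card Long"
    using card_Diff_subset[OF fin_n sub] unfolding N_def by simp
  then have "real (card (cuts (n + k)) - N) \<le> real ((N + 1) * (2 * k) + 2 ^ k * card Long)"
    by (simp only: of_nat_le_iff)
  then have count: "real (card (cuts (n + k))) - N \<le> real (N + 1) * (2 * k) + 2 ^ k * card Long"
    using card_mono[OF fin sub] by (simp add: N_def of_nat_diff algebra_simps)
  have "real (card Long) * L \<le> 1"
    using card_long_steps[of N g L] g_le g0 g1 unfolding Long_def by simp
  then have "2 ^ k * real (card Long) \<le> 2 ^ k / L" using L by (simp add: field_simps)
  then show ?thesis using count unfolding N_def by simp
qed

theorem good_triple_exists: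
  assumes P: "exp (real k) < real (card (cuts n))"
    and growth: "real (card (cuts (n + k))) \<ge> (4 + 2 * real k) * real (card (cuts n))"
  shows "\<exists>xp p xq q xr r. good xp p xq q xr r \<and>
           p \<in> {n+1..n+k} \<and> q \<in> {n+1..n+k} \<and> r \<in> {n+1..n+k} \<and>
           \<bar>xp - xq\<bar> \<le> exp (real k) / real (card (cuts n)) \<and>
           \<bar>xp - xr\<bar> \<le> exp (real k) / real (card (cuts n)) \<and>
           \<bar>xq - xr\<bar> \<le> exp (real k) / real (card (cuts n))"
proof (rule ccontr)
  assume none: "\<not> ?thesis"
  define N L where "N = card (cuts n)" and "L = exp (real k) / real N"
  have N: "real N > exp (real k)" using P by (simp add: N_def)
  then have N_pos: "real N > 0" using exp_gt_zero[of "real k"] by linarith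
  then have L: "L > 0" by (simp add: L_def)
  have "(4 + 2 * real k) * real N > 0" using N_pos by simp
  then have "real (card (cuts (n + k))) > 0" using growth unfolding N_def by linarith
  then have fin: "finite (cuts (n + k))" by (simp add: card_ge_0_finite)
  have "\<not> good_triple_in n k lo up" if short: "up - lo \<le> L" for lo up
  proof
    assume "good_triple_in n k lo up"
    then obtain u p v q x r where g: "good u p v q x r" "p \<in> {n+1..n+k}" "q \<in> {n+1..n+k}"
        "r \<in> {n+1..n+k}" "u \<in> {lo<..<up}" "v \<in> {lo<..<up}" "x \<in> {lo<..<up}"
      unfolding good_triple_in_def by blast
    then have "\<bar>u - v\<bar> \<le> L" "\<bar>u - x\<bar> \<le> L" "\<bar>v - x\<bar> \<le> L" using short by auto
    then show False
      using none g(1-4) unfolding L_def N_def by (elim notE) (intro exI conjI; assumption)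
  qed
  then have "real (card (cuts (n + k))) \<le> real N + real (N + 1) * (2 * k) + 2 ^ k / L"
    unfolding N_def by (rule card_cuts_bound[OF fin L])
  moreover have "2 ^ k / L \<le> real N"
    using two_pow_le_exp[of k] N_pos by (simp add: L_def field_simps mult_left_mono)
  ultimately have "(4 + 2 * real k) * real N \<le> 2 * real N + real (N + 1) * (2 * real k)"
    using growth unfolding N_def by linarith
  then have "real N \<le> real k" by (simp add: algebra_simps)
  then show False using N exp_ge_add_one_self[of "real k"] by linarith
qed

end

theorem lemma2p2:
  fixes a b c :: complex and n k :: nat
  assumes "nondeg_triangle a b c"
    and "k \<ge> 4"
    and "exp (real k) < real (P_count a b c n)"
    and "real (P_count a b c (n + k)) \<ge> (4 + 2 * real k) * real (P_count a b c n)"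
  shows "\<exists>xp p xq q xr r.
           good_position a b c xp p xq q xr r \<and>
           p \<in> {n+1..n+k} \<and> q \<in> {n+1..n+k} \<and> r \<in> {n+1..n+k} \<and>
           \<bar>xp - xq\<bar> \<le> exp (real k) / real (P_count a b c n) \<and>
           \<bar>xp - xr\<bar> \<le> exp (real k) / real (P_count a b c n) \<and>
           \<bar>xq - xr\<bar> \<le> exp (real k) / real (P_count a b c n)"
proof -
  interpret T: billiard_triangle a b c by unfold_locales (fact assms(1))
  interpret C: nested_partitions "has_index a b c"
    by unfold_locales (fact T.has_index_range, fact T.cut_point_between)
  have cuts_eq: "C.cuts = cut_points a b c"
    by (simp add: C.cuts_def cut_points_def fun_eq_iff)
  have "C.good = good_position a b c"
    by (simp add: C.good_def good_position_def cuts_eq fun_eq_iff)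
  then show ?thesis
    using C.good_triple_exists assms(3,4) unfolding P_count_def cuts_eq by simp
qed

end
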